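(* Let $n\geq1$ and let $G$ be any of the game-graphs $G_n(\mathbb T\ltimes\mathbb N^2)$, $G'_n(\mathbb T\rtimes\mathbb N^2)$, $G_n(\mathbb N^2\ltimes\mathbb N^2)$, $G'_n(\mathbb N^2\rtimes\mathbb N^2)$. Let $x:\partial G\to\{0,1\}$ assign a winner to each possible outcome ($0$ = Alice wins, $1$ = Bob wins). If Alice has a winning strategy given $x$, then a Toom cycle is present in $(G,x)$.
   Context: **Decision graphs.** - $\mathbb T$ is the set of finite words over $\{1,2\}$ with root $\varnothing$, edges $\mathbf i\to\mathbf ik$ ($k\in\{1,2\}$), and $|\mathbf i|$ = length. - $\mathbb N^2$ has root $(0,0)$ and edges $(i,j)\to(i,j)1:=(i+1,j)$ and $(i,j)\to(i,j)2:=(i,j+1)$, with $|(i,j)|=i+j$. **Products.** For $D^1,D^2\in\{\mathbb T,\mathbb N^2\}$: - $D^1\ltimes D^2$ has as vertices the pairs $(a,b)$ with $|a|=|b|$ (level $2|b|$) or $|a|=|b|+1$ (level $2|b|+1$), root $(0,0)$, edges $(a,b)\to(ak,b)$ from even levels and $(a,b)\to(a,bk)$ from odd levels. - $D^1\rtimes D^2$ has as vertices the pairs $(a,b)$ with $|a|=|b|$ (level $2|a|$) or $|b|=|a|+1$ (level $2|a|+1$), with edges $(a,b)\to(a,bk)$ from even levels and $(a,b)\to(ak,b)$ from odd levels. **Game-graphs.** $G_n(D)$ (resp. $G'_n(D)$) is the restriction to levels $\leq n$, with root $0$ and possible outcomes $\partial G$ = level $n$. Interior vertices at even levels are Alice's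 turn (resp. Bob's turn) and those at odd levels are Bob's (resp. Alice's). In all four cases Alice's moves change $a$ and Bob's change $b$. Alice has a winning strategy given $x$ if she has a strategy (choice of out-neighbour at each of her vertices) such that whatever Bob plays the outcome $v$ has $x(v)=0$. **Edge classes.** Let $\mathring G$ be the non-outcome vertices. Let $\vec A$ be the set of edges $((a,b),(ak,b))$ from Alice-turn vertices, and $\vec B_k$ the set of edges $((a,b),(a,bk))$ from Bob-turn vertices. **Walks and step types.** A walk is $\psi=\psi_0\cdots\psi_l$ with each $(\psi_{k-1},\psi_k)$ an edge or a reversed edge. The $k$-th step is: - su if $(\psi_{k-1},\psi_k)\in\vec A$, and sd if $(\psi_k,\psi_{k-1})\in\vec A$; - lu if $(\psi_{k-1},\psi_k)\in\vec B_2$, and ld if $(\psi_k,\psi_{k-1})\in\vec B_1$; - ru if $(\psi_{k-1},\psi_k)\in\vec B_1$, and rd if $(\psi_k,\psi_{k-1})\in\vec B_2$. Types su, lu, ru are "up" and sd, ld, rd are "down". Let - $N_\uparrow=\{0\}\cup\{0<k<l:$ steps $k,k+1$ both up$\}$, - $N_\circ=\{0<k<l:$ step $k$ down, step $k+1$ up$\}$, - $N_\downarrow=\{l\}\cup\{0<k<l:$ steps $k,k+1$ both down$\}$, - $N_\ast=\{0<k<l:$ step $k$ up, step $k+1$ down$\}$. **Toom cycle.** A Toom cycle is a walk with $l\geq2$ satisfying all of the following. - $\psi_0=\psi_l=0$; the first step is su or ru; the last step is sd or rd. - For $0<k<l$ with $\psi_k\in\mathring G$, the only allowed (step $k$ $\to$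 step $k+1$) combinations are su$\to$ru, ru$\to$su, lu$\to$su, sd$\to$rd or ld, rd$\to$sd, ld$\to$lu. - For $\psi_k\in\partial G$, the only allowed combinations are su$\to$sd, ru$\to$rd or ld, lu$\to$rd or ld. - (i) $\psi_k\neq\psi_m$ for distinct $k,m\in N_\ast$. - (ii) If $\psi_k=\psi_m$ with $k\in N_s$, $m\in N_t$, $s,t\in\{\uparrow,\circ,\downarrow\}$ and $s\leq t$ in the order $\uparrow<\circ<\downarrow$, then $k\leq m$. **Presence.** A Toom cycle is present in $(G,x)$ if $x(\psi_k)=0$ for all $k$ with $\psi_k\in\partial G$. *)

theory Defs
  imports Main
begin

record 'a dgraph =
  dv :: "'a set"
  droot :: 'a
  dch :: "'a \<Rightarrow> nat \<Rightarrow> 'a"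
  dlen :: "'a \<Rightarrow> nat"

definition Tree :: "nat list dgraph" where
  "Tree = \<lparr>dv = {w. set w \<subseteq> {1,2}}, droot = [], dch = (\<lambda>w k. w @ [k]), dlen = length\<rparr>"

definition N2 :: "(nat \<times> nat) dgraph" where
  "N2 = \<lparr>dv = UNIV, droot = (0,0),
         dch = (\<lambda>(i,j) k. if k = 1 then (i+1,j) else (i,j+1)),
         dlen = (\<lambda>(i,j). i + j)\<rparr>"

definition plev :: "'a dgraph \<Rightarrow> 'b dgraph \<Rightarrow> 'a \<times> 'b \<Rightarrow> nat" where
  "plev D1 D2 v = dlen D1 (fst v) + dlen D2 (snd v)"

text \<open>Left product D1 \<ltimes> D2 (lt = True) and right product D1 \<rtimes> D2 (lt = False).\<close>
definition pvert :: "bool \<Rightarrow> 'a dgraph \<Rightarrow> 'b dgraph \<Rightarrow> ('a \<times> 'b) set" where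
  "pvert lt D1 D2 = {(a,b). a \<in> dv D1 \<and> b \<in> dv D2 \<and>
      (dlen D1 a = dlen D2 b \<or>
       (if lt then dlen D1 a = dlen D2 b + 1 else dlen D2 b = dlen D1 a + 1))}"

text \<open>Edges changing the first coordinate a (these leave the "a-move" vertices).
  In D1 \<ltimes> D2 these leave even levels (|a| = |b|), in D1 \<rtimes> D2 odd levels (|b| = |a|+1).\<close>
definition pEa :: "bool \<Rightarrow> 'a dgraph \<Rightarrow> 'b dgraph \<Rightarrow> (('a \<times> 'b) \<times> ('a \<times> 'b)) set" where
  "pEa lt D1 D2 = {((a,b), (dch D1 a k, b)) | a b k. (a,b) \<in> pvert lt D1 D2 \<and> k \<in> {1,2} \<and>
      (if lt then dlen D1 a = dlen D2 b else dlen D2 b = dlen D1 a + 1)}"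

definition pEb :: "bool \<Rightarrow> 'a dgraph \<Rightarrow> 'b dgraph \<Rightarrow> nat \<Rightarrow> (('a \<times> 'b) \<times> ('a \<times> 'b)) set" where
  "pEb lt D1 D2 k = {((a,b), (a, dch D2 b k)) | a b. (a,b) \<in> pvert lt D1 D2 \<and> k \<in> {1,2} \<and>
      (if lt then dlen D1 a = dlen D2 b + 1 else dlen D1 a = dlen D2 b)}"

definition pedges :: "bool \<Rightarrow> 'a dgraph \<Rightarrow> 'b dgraph \<Rightarrow> (('a \<times> 'b) \<times> ('a \<times> 'b)) set" where
  "pedges lt D1 D2 = pEa lt D1 D2 \<union> pEb lt D1 D2 1 \<union> pEb lt D1 D2 2"

record 'v game =
  gV :: "'v set"
  groot :: 'v
  gOut :: "'v set"
  gAlice :: "'v set"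
  gBob :: "'v set"
  gE :: "('v \<times> 'v) set"
  gA :: "('v \<times> 'v) set"
  gB :: "nat \<Rightarrow> ('v \<times> 'v) set"

text \<open>The game-graph obtained by restricting the product (lt selects \<ltimes> / \<rtimes>) to levels
  at most n; primed = False gives G_n (Alice moves at even levels), primed = True gives G'_n
  (Alice moves at odd levels).\<close>
definition mkgame :: "bool \<Rightarrow> bool \<Rightarrow> 'a dgraph \<Rightarrow> 'b dgraph \<Rightarrow> nat \<Rightarrow> ('a \<times> 'b) game" where
  "mkgame lt primed D1 D2 n =
    (let V = {v \<in> pvert lt D1 D2. plev D1 D2 v \<le> n};
         Al = {v \<in> V. plev D1 D2 v < n \<and> (even (plev D1 D2 v) \<longleftrightarrow> \<not> primed)};
         Bo = {v \<in> V. plev D1 D2 v < n \<and> (even (plev D1 D2 v) \<longleftrightarrow> primed)};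
         E = {(u,w) \<in> pedges lt D1 D2. u \<in> V \<and> w \<in> V}
     in \<lparr>gV = V, groot = (droot D1, droot D2),
         gOut = {v \<in> V. plev D1 D2 v = n},
         gAlice = Al, gBob = Bo, gE = E,
         gA = {((a,b), (dch D1 a k, b)) | a b k. k \<in> {1,2} \<and> (a,b) \<in> Al \<and>
                 ((a,b), (dch D1 a k, b)) \<in> E},
         gB = (\<lambda>k. {((a,b), (a, dch D2 b k)) | a b. k \<in> {1,2} \<and> (a,b) \<in> Bo \<and>
                 ((a,b), (a, dch D2 b k)) \<in> E})\<rparr>)"

inductive_set reach :: "'v game \<Rightarrow> ('v \<Rightarrow> 'v) \<Rightarrow> 'v set" for G \<sigma> where
  root: "groot G \<in> reach G \<sigma>"
| alice: "v \<in> reach G \<sigma> \<Longrightarrow> v \<in> gAlice G \<Longrightarrow> \<sigma> v \<in> reach G \<sigma>"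
| bob: "v \<in> reach G \<sigma> \<Longrightarrow> v \<in> gBob G \<Longrightarrow> (v, w) \<in> gE G \<Longrightarrow> w \<in> reach G \<sigma>"

definition alice_wins :: "'v game \<Rightarrow> ('v \<Rightarrow> nat) \<Rightarrow> bool" where
  "alice_wins G x \<longleftrightarrow> (\<exists>\<sigma>. (\<forall>v \<in> gAlice G. (v, \<sigma> v) \<in> gE G) \<and>
                          (\<forall>v \<in> reach G \<sigma>. v \<in> gOut G \<longrightarrow> x v = 0))"

datatype stype = SU | SD | LU | LD | RU | RD

definition is_up :: "stype \<Rightarrow> bool" where
  "is_up t \<longleftrightarrow> t \<in> {SU, LU, RU}"

definition is_down :: "stype \<Rightarrow> bool" where
  "is_down t \<longleftrightarrow> t \<in> {SD, LD, RD}"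

fun steptype :: "'v game \<Rightarrow> 'v \<Rightarrow> 'v \<Rightarrow> stype \<Rightarrow> bool" where
  "steptype G u w SU \<longleftrightarrow> (u, w) \<in> gA G"
| "steptype G u w SD \<longleftrightarrow> (w, u) \<in> gA G"
| "steptype G u w LU \<longleftrightarrow> (u, w) \<in> gB G 2"
| "steptype G u w LD \<longleftrightarrow> (w, u) \<in> gB G 1"
| "steptype G u w RU \<longleftrightarrow> (u, w) \<in> gB G 1"
| "steptype G u w RD \<longleftrightarrow> (w, u) \<in> gB G 2"

text \<open>A walk is psi_0 ... psi_l given as a list of length l+1.
  step G psi k t: the k-th step (1 \<le> k \<le> l) has type t.\<close>
definition step :: "'v game \<Rightarrow> 'v list \<Rightarrow> nat \<Rightarrow> stype \<Rightarrow> bool" where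
  "step G \<psi> k t \<longleftrightarrow> 1 \<le> k \<and> k < length \<psi> \<and> steptype G (\<psi> ! (k - 1)) (\<psi> ! k) t"

definition step_up :: "'v game \<Rightarrow> 'v list \<Rightarrow> nat \<Rightarrow> bool" where
  "step_up G \<psi> k \<longleftrightarrow> (\<exists>t. step G \<psi> k t \<and> is_up t)"

definition step_down :: "'v game \<Rightarrow> 'v list \<Rightarrow> nat \<Rightarrow> bool" where
  "step_down G \<psi> k \<longleftrightarrow> (\<exists>t. step G \<psi> k t \<and> is_down t)"

definition is_walk :: "'v game \<Rightarrow> 'v list \<Rightarrow> bool" where
  "is_walk G \<psi> \<longleftrightarrow> \<psi> \<noteq> [] \<and>
     (\<forall>k. 1 \<le> k \<and> k < length \<psi> \<longrightarrow>
        (\<psi> ! (k - 1), \<psi> ! k) \<in> gE G \<or> (\<psi> ! k, \<psi> ! (k - 1)) \<in> gE G)"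

text \<open>Index sets; the classes are indexed 0 = up, 1 = circ, 2 = down, 3 = ast.
  Here l = length psi - 1.\<close>
definition Nset :: "'v game \<Rightarrow> 'v list \<Rightarrow> nat \<Rightarrow> nat set" where
  "Nset G \<psi> s = (let l = length \<psi> - 1 in
     if s = 0 then {0} \<union> {k. 0 < k \<and> k < l \<and> step_up G \<psi> k \<and> step_up G \<psi> (k+1)}
     else if s = 1 then {k. 0 < k \<and> k < l \<and> step_down G \<psi> k \<and> step_up G \<psi> (k+1)}
     else if s = 2 then {l} \<union> {k. 0 < k \<and> k < l \<and> step_down G \<psi> k \<and> step_down G \<psi> (k+1)}
     else {k. 0 < k \<and> k < l \<and> step_up G \<psi> k \<and> step_down G \<psi> (k+1)})"

definition interior_ok :: "stype \<Rightarrow> stype \<Rightarrow> bool" where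
  "interior_ok t1 t2 \<longleftrightarrow> (t1, t2) \<in> {(SU, RU), (RU, SU), (LU, SU), (SD, RD), (SD, LD),
                                        (RD, SD), (LD, LU)}"

definition boundary_ok :: "stype \<Rightarrow> stype \<Rightarrow> bool" where
  "boundary_ok t1 t2 \<longleftrightarrow> (t1, t2) \<in> {(SU, SD), (RU, RD), (RU, LD), (LU, RD), (LU, LD)}"

definition toom_cycle :: "'v game \<Rightarrow> 'v list \<Rightarrow> bool" where
  "toom_cycle G \<psi> \<longleftrightarrow> (let l = length \<psi> - 1 in
     is_walk G \<psi> \<and> 2 \<le> l \<and>
     \<psi> ! 0 = groot G \<and> \<psi> ! l = groot G \<and>
     (step G \<psi> 1 SU \<or> step G \<psi> 1 RU) \<and>
     (step G \<psi> l SD \<or> step G \<psi> l RD) \<and>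
     (\<forall>k t1 t2. 0 < k \<and> k < l \<and> \<psi> ! k \<in> gV G - gOut G \<and>
         step G \<psi> k t1 \<and> step G \<psi> (k+1) t2 \<longrightarrow> interior_ok t1 t2) \<and>
     (\<forall>k t1 t2. 0 < k \<and> k < l \<and> \<psi> ! k \<in> gOut G \<and>
         step G \<psi> k t1 \<and> step G \<psi> (k+1) t2 \<longrightarrow> boundary_ok t1 t2) \<and>
     (\<forall>k \<in> Nset G \<psi> 3. \<forall>m \<in> Nset G \<psi> 3. k \<noteq> m \<longrightarrow> \<psi> ! k \<noteq> \<psi> ! m) \<and>
     (\<forall>s t k m. s \<le> t \<and> t \<le> 2 \<and> k \<in> Nset G \<psi> s \<and> m \<in> Nset G \<psi> t \<and> \<psi> ! k = \<psi> ! m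
         \<longrightarrow> k \<le> m))"

definition toom_present :: "'v game \<Rightarrow> ('v \<Rightarrow> nat) \<Rightarrow> bool" where
  "toom_present G x \<longleftrightarrow> (\<exists>\<psi>. toom_cycle G \<psi> \<and>
      (\<forall>k < length \<psi>. \<psi> ! k \<in> gOut G \<longrightarrow> x (\<psi> ! k) = 0))"

end

theory Submission
  imports Defs
begin

(* Induction on n. For a vertex v of level n let x'(v) = 0 iff Alice wins from v in G_{n+1}
   with one move left. A winning strategy of Alice in (G_{n+1}, x) restricts to one in
   (G_n, x'), so by induction some Toom cycle q is present in (G_n, x'). It is refined into a
   Toom cycle of G_{n+1} present for x: q is copied, but at a visit of level n the walk climbs to
   level n+1, to Alice's winning child or, at Bob's turn, to both children in turn, and descends
   again to the last visit of q at level n adjacent to the current vertex, skipping the part of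
   q in between. Skipping ahead ensures that no vertex of level n+1 is visited twice, which is
   condition (i), and preserves the order condition (ii). The base case n = 1 is an explicit
   cycle around the root.
   Every edge raises the level by one, so step types and the classes N_s of the indices of a
   walk can be read off the levels of its vertices; all bookkeeping is done in these terms. *)

section \<open>Classes of walk indices\<close>

lemma is_walk_snoc:
  assumes "is_walk G p" "(last p, z) \<in> gE G \<or> (z, last p) \<in> gE G"
  shows "is_walk G (p @ [z])"
  using assms unfolding is_walk_def
  by (auto simp: nth_append last_conv_nth less_Suc_eq)

(* Classes 0, 1, 2, 3 stand for N_up, N_circ, N_down, N_ast, as in Nset; they are computed from
   the levels of the neighbouring vertices. *)
definition turn_class :: "nat \<Rightarrow> nat \<Rightarrow> nat \<Rightarrow> nat" where
  "turn_class a b c = (if a < b then (if b < c then 0 else 3) else (if b < c then 1 else 2))"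

definition index_class :: "('v \<Rightarrow> nat) \<Rightarrow> 'v list \<Rightarrow> nat \<Rightarrow> nat" where
  "index_class lv p k =
     (if k = 0 then 0 else if k = length p - 1 then 2
      else turn_class (lv (p!(k-1))) (lv (p!k)) (lv (p!(k+1))))"

(* Conditions (i) and (ii) for a vertex visited at indices k < j of classes c and d. *)
definition recurrence_ok :: "nat \<Rightarrow> nat \<Rightarrow> bool" where
  "recurrence_ok c d \<longleftrightarrow> (c = 3 \<longrightarrow> d \<noteq> 3) \<and> (c \<le> 2 \<and> d \<le> 2 \<longrightarrow> c < d)"

definition locally_ok :: "'v game \<Rightarrow> 'v \<Rightarrow> 'v \<Rightarrow> 'v \<Rightarrow> bool" where
  "locally_ok G a b c \<longleftrightarrow> (\<forall>t1 t2. steptype G a b t1 \<longrightarrow> steptype G b c t2 \<longrightarrow>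
      (b \<in> gV G - gOut G \<longrightarrow> interior_ok t1 t2) \<and> (b \<in> gOut G \<longrightarrow> boundary_ok t1 t2))"

lemma turn_class_iff:
  "a \<noteq> b \<Longrightarrow> b \<noteq> c \<Longrightarrow> turn_class a b c = s \<longleftrightarrow>
     (s = 0 \<and> a < b \<and> b < c) \<or> (s = 1 \<and> b < a \<and> b < c) \<or>
     (s = 2 \<and> b < a \<and> c < b) \<or> (s = 3 \<and> a < b \<and> c < b)"
  by (auto simp: turn_class_def)

lemma index_class_snoc:
  assumes "k < length p - 1"
  shows "index_class lv (p @ [z]) k = index_class lv p k"
proof -
  have "k \<noteq> length p" "k \<noteq> length p - 1" "k - 1 < length p" "k + 1 < length p"
    using assms by auto
  then show ?thesis unfolding index_class_def by (simp add: nth_append)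
qed

lemma index_class_snoc_last:
  assumes "1 < length p"
  shows "index_class lv (p @ [z]) (length p - 1) =
           turn_class (lv (p!(length p - 2))) (lv (p!(length p - 1))) (lv z)"
proof -
  have "length p - 1 \<noteq> 0" "length p - 1 \<noteq> length p" "length p - 1 - 1 = length p - 2"
    "length p - 1 + 1 = length p" "length p - 2 < length p"
    using assms by auto
  then show ?thesis unfolding index_class_def by (simp add: nth_append)
qed

lemma triples_snoc:
  assumes "\<forall>k. 0 < k \<and> k < length p - 1 \<longrightarrow> L (p!(k-1)) (p!k) (p!(k+1))"
    and "1 < length p \<Longrightarrow> L (p!(length p - 2)) (p!(length p - 1)) z"
  shows "\<forall>k. 0 < k \<and> k < length (p @ [z]) - 1 \<longrightarrow>
           L ((p @ [z])!(k-1)) ((p @ [z])!k) ((p @ [z])!(k+1))"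
proof (intro allI impI)
  fix k assume k: "0 < k \<and> k < length (p @ [z]) - 1"
  show "L ((p @ [z])!(k-1)) ((p @ [z])!k) ((p @ [z])!(k+1))"
  proof (cases "k < length p - 1")
    case True
    then show ?thesis using assms(1) k by (auto simp: nth_append)
  next
    case False
    then have "k = length p - 1" "1 < length p" using k by auto
    then show ?thesis using assms(2) by (auto simp: nth_append numeral_2_eq_2)
  qed
qed

lemma recurrences_snoc:
  assumes "\<forall>k j. k < j \<and> j < length p - 1 \<longrightarrow> p!k = p!j \<longrightarrow>
             R (index_class lv p k) (index_class lv p j)"
    and "\<And>k. k < length p - 1 \<Longrightarrow> p!k = p!(length p - 1) \<Longrightarrow>
             R (index_class lv p k) (index_class lv (p @ [z]) (length p - 1))"
  shows "\<forall>k j. k < j \<and> j < length (p @ [z]) - 1 \<longrightarrow> (p @ [z])!k = (p @ [z])!j \<longrightarrow>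
           R (index_class lv (p @ [z]) k) (index_class lv (p @ [z]) j)"
proof (intro allI impI)
  fix k j assume kj: "k < j \<and> j < length (p @ [z]) - 1" and eq: "(p @ [z])!k = (p @ [z])!j"
  have k: "k < length p - 1" and kp: "k < length p" using kj by auto
  show "R (index_class lv (p @ [z]) k) (index_class lv (p @ [z]) j)"
  proof (cases "j < length p - 1")
    case True
    then show ?thesis using assms(1) kj eq k by (auto simp: nth_append index_class_snoc)
  next
    case False
    then have "j = length p - 1" using kj by auto
    then show ?thesis
      using assms(2)[OF k] eq kj kp by (auto simp: nth_append index_class_snoc[OF k])
  qed
qed

(* The last entry is left out: its class depends on the next step. *)
definition earlier_entries :: "('v \<Rightarrow> nat \<Rightarrow> bool) \<Rightarrow> ('v \<Rightarrow> nat) \<Rightarrow> 'v list \<Rightarrow> bool" where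
  "earlier_entries P lv p \<longleftrightarrow> (\<forall>k < length p - 1. P (p!k) (index_class lv p k))"

lemma earlier_entriesD: "earlier_entries P lv p \<Longrightarrow> k < length p - 1 \<Longrightarrow> P (p!k) (index_class lv p k)"
  unfolding earlier_entries_def by blast

lemma earlier_entries_snoc:
  assumes "earlier_entries P lv p" "p \<noteq> []"
    and "Q (p!(length p - 1)) (index_class lv (p @ [z]) (length p - 1))"
    and "\<And>v c. P v c \<Longrightarrow> Q v c"
  shows "earlier_entries Q lv (p @ [z])"
  unfolding earlier_entries_def
proof (intro allI impI)
  fix k assume k: "k < length (p @ [z]) - 1"
  show "Q ((p @ [z])!k) (index_class lv (p @ [z]) k)"
  proof (cases "k < length p - 1")
    case True
    then show ?thesis
      using assms(1,4) earlier_entriesD by (fastforce simp: nth_append index_class_snoc)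
  next
    case False
    then have "k = length p - 1" using k by auto
    then show ?thesis using assms(2,3) by (simp add: nth_append)
  qed
qed

section \<open>The game graphs\<close>

locale product_game =
  fixes lt :: bool and D1 :: "'a dgraph" and D2 :: "'b dgraph"
  assumes root1: "droot D1 \<in> dv D1" and root2: "droot D2 \<in> dv D2"
    and root_len1: "dlen D1 (droot D1) = 0" and root_len2: "dlen D2 (droot D2) = 0"
    and child1: "\<And>a k. a \<in> dv D1 \<Longrightarrow> k \<in> {1,2} \<Longrightarrow>
                   dch D1 a k \<in> dv D1 \<and> dlen D1 (dch D1 a k) = Suc (dlen D1 a)"
    and child2: "\<And>b k. b \<in> dv D2 \<Longrightarrow> k \<in> {1,2} \<Longrightarrow>
                   dch D2 b k \<in> dv D2 \<and> dlen D2 (dch D2 b k) = Suc (dlen D2 b)"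
    and children2_distinct: "\<And>b. b \<in> dv D2 \<Longrightarrow> dch D2 b 1 \<noteq> dch D2 b 2"
    and child2_inj: "\<And>b b' k. b \<in> dv D2 \<Longrightarrow> b' \<in> dv D2 \<Longrightarrow> k \<in> {1,2} \<Longrightarrow>
                   dch D2 b k = dch D2 b' k \<Longrightarrow> b = b'"
begin

(* Alice always moves the first coordinate: G n is G_n(D1 \<ltimes> D2) for lt = True and
   G'_n(D1 \<rtimes> D2) for lt = False. *)
abbreviation G :: "nat \<Rightarrow> ('a \<times> 'b) game" where
  "G n \<equiv> mkgame lt (\<not> lt) D1 D2 n"

abbreviation lev :: "'a \<times> 'b \<Rightarrow> nat" where
  "lev \<equiv> plev D1 D2"

abbreviation root :: "'a \<times> 'b" where
  "root \<equiv> (droot D1, droot D2)"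

definition bob_child :: "nat \<Rightarrow> 'a \<times> 'b \<Rightarrow> 'a \<times> 'b" where
  "bob_child k v = (fst v, dch D2 (snd v) k)"

lemma gV_G: "gV (G n) = {v \<in> pvert lt D1 D2. lev v \<le> n}"
  by (simp add: mkgame_def Let_def)

lemma gOut_G: "gOut (G n) = {v \<in> gV (G n). lev v = n}"
  by (auto simp: mkgame_def Let_def)

lemma gAlice_G: "gAlice (G n) = {v \<in> gV (G n). lev v < n \<and> even (lev v) = lt}"
  by (auto simp: mkgame_def Let_def)

lemma gBob_G: "gBob (G n) = {v \<in> gV (G n). lev v < n \<and> even (lev v) \<noteq> lt}"
  by (auto simp: mkgame_def Let_def)

lemma gE_G: "gE (G n) = {(u, w) \<in> pedges lt D1 D2. u \<in> gV (G n) \<and> w \<in> gV (G n)}"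
  by (auto simp: mkgame_def Let_def)

lemma groot_G: "groot (G n) = root"
  by (simp add: mkgame_def Let_def)

lemma gA_G_iff: "(u, w) \<in> gA (G n) \<longleftrightarrow>
    (\<exists>k\<in>{1,2}. w = (dch D1 (fst u) k, snd u)) \<and> u \<in> gAlice (G n) \<and> (u, w) \<in> gE (G n)"
  by (cases u) (simp only: mkgame_def Let_def game.simps, auto)

lemma gB_G_iff: "(u, w) \<in> gB (G n) k \<longleftrightarrow>
    k \<in> {1,2} \<and> w = bob_child k u \<and> u \<in> gBob (G n) \<and> (u, w) \<in> gE (G n)"
  by (cases u) (simp only: mkgame_def Let_def game.simps bob_child_def, auto)

lemma root_in_gV: "root \<in> gV (G n)" and lev_root: "lev root = 0"
  by (auto simp: gV_G pvert_def plev_def root1 root2 root_len1 root_len2)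

lemma pedges_level:
  assumes "(u, w) \<in> pedges lt D1 D2"
  shows "u \<in> pvert lt D1 D2 \<and> w \<in> pvert lt D1 D2 \<and> lev w = Suc (lev u)"
  using assms unfolding pedges_def pEa_def pEb_def
  by (auto simp: pvert_def plev_def child1 child2 split: if_splits)

lemma edge_level: "(u, w) \<in> gE (G n) \<Longrightarrow>
    u \<in> gV (G n) \<and> w \<in> gV (G n) \<and> lev w = Suc (lev u) \<and> lev u < n"
  using pedges_level[of u w] by (auto simp: gE_G gV_G)

lemma edge_to_outcome:
  "(v, w) \<in> gE (G (Suc n)) \<Longrightarrow> lev v = n \<Longrightarrow> w \<in> gOut (G (Suc n)) \<and> lev w = Suc n"
  using edge_level[of v w "Suc n"] by (auto simp: gOut_G)

lemma gA_edge: "(u, w) \<in> gA (G n) \<Longrightarrow> (u, w) \<in> gE (G n) \<and> u \<in> gAlice (G n)"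
  by (simp add: gA_G_iff)

lemma gB_edge: "(u, w) \<in> gB (G n) k \<Longrightarrow>
    (u, w) \<in> gE (G n) \<and> u \<in> gBob (G n) \<and> k \<in> {1,2} \<and> w = bob_child k u"
  unfolding gB_G_iff by blast

lemma alice_not_bob: "u \<in> gAlice (G n) \<Longrightarrow> u \<notin> gBob (G m)"
  by (simp add: gAlice_G gBob_G)

lemma edge_cases:
  assumes "(u, w) \<in> gE (G n)"
  shows "(u, w) \<in> gA (G n) \<or> (u, w) \<in> gB (G n) 1 \<or> (u, w) \<in> gB (G n) 2"
proof -
  have uV: "u \<in> gV (G n)" and lu: "lev u < n" and uw: "(u, w) \<in> pedges lt D1 D2"
    using edge_level[OF assms] assms by (auto simp: gE_G)
  show ?thesis
  proof (cases "(u, w) \<in> pEa lt D1 D2")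
    case True
    then have "even (lev u) = lt" "\<exists>k\<in>{1,2}. w = (dch D1 (fst u) k, snd u)"
      unfolding pEa_def plev_def by (auto split: if_splits)
    then show ?thesis using assms uV lu by (simp add: gA_G_iff gAlice_G)
  next
    case False
    then obtain k where k: "(u, w) \<in> pEb lt D1 D2 k" "k \<in> {1,2}"
      using uw unfolding pedges_def by auto
    then have "even (lev u) \<noteq> lt" "w = bob_child k u"
      unfolding pEb_def plev_def bob_child_def by (auto split: if_splits)
    then have "(u, w) \<in> gB (G n) k" using assms uV lu k(2) by (simp add: gB_G_iff gBob_G)
    then show ?thesis using k(2) by auto
  qed
qed

lemma edge_from_alice: "(u, w) \<in> gE (G n) \<Longrightarrow> u \<in> gAlice (G n) \<Longrightarrow> (u, w) \<in> gA (G n)"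
  using edge_cases gB_edge alice_not_bob by blast

lemma edge_from_bob: "(u, w) \<in> gE (G n) \<Longrightarrow> u \<in> gBob (G n) \<Longrightarrow>
    (u, w) \<in> gB (G n) 1 \<or> (u, w) \<in> gB (G n) 2"
  using edge_cases gA_edge alice_not_bob by blast

lemma bob_in_dv: "u \<in> gBob (G n) \<Longrightarrow> fst u \<in> dv D1 \<and> snd u \<in> dv D2"
  by (auto simp: gBob_G gV_G pvert_def)

lemma gB_1_2_disjoint: "(u, w) \<in> gB (G n) 1 \<Longrightarrow> (u, w) \<notin> gB (G m) 2"
  using children2_distinct bob_in_dv unfolding gB_G_iff bob_child_def by auto

lemma gB_parent_unique:
  assumes "(u, w) \<in> gB (G n) k" "(u', w) \<in> gB (G m) k"
  shows "u = u'"
proof -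
  have "fst u = fst u'" "dch D2 (snd u) k = dch D2 (snd u') k" "k \<in> {1,2}"
    using assms unfolding gB_G_iff bob_child_def by auto
  moreover have "snd u \<in> dv D2" "snd u' \<in> dv D2"
    using assms[THEN gB_edge] bob_in_dv by blast+
  ultimately show ?thesis using child2_inj by (metis prod.expand)
qed

lemma bob_child_edge:
  assumes "u \<in> gBob (G n)" "k \<in> {1,2}"
  shows "(u, bob_child k u) \<in> gB (G n) k"
proof -
  obtain a b where u: "u = (a, b)" by (cases u)
  have uP: "(a, b) \<in> pvert lt D1 D2" and "even (dlen D1 a + dlen D2 b) \<noteq> lt"
    and lu: "lev u < n"
    using assms(1) u by (auto simp: gBob_G gV_G plev_def)
  then have "if lt then dlen D1 a = dlen D2 b + 1 else dlen D1 a = dlen D2 b"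
    by (cases lt) (auto simp: pvert_def)
  then have "((a, b), (a, dch D2 b k)) \<in> pedges lt D1 D2"
    using uP assms(2) unfolding pedges_def pEb_def by blast
  then have "(u, bob_child k u) \<in> gE (G n)"
    using pedges_level lu u by (auto simp: gE_G gV_G bob_child_def)
  then show ?thesis using assms by (simp add: gB_G_iff)
qed

lemma bob_children_distinct: "v \<in> gBob (G m) \<Longrightarrow> bob_child 1 v \<noteq> bob_child 2 v"
  using bob_child_edge[of v m 1] bob_child_edge[of v m 2] gB_1_2_disjoint by fastforce

lemma interior_owner: "v \<in> gV (G n) \<Longrightarrow> lev v < n \<Longrightarrow> v \<in> gAlice (G n) \<or> v \<in> gBob (G n)"
  by (auto simp: gAlice_G gBob_G)

lemma alice_same_level:
    "v \<in> gAlice (G m) \<Longrightarrow> w \<in> gV (G m) \<Longrightarrow> lev w = lev v \<Longrightarrow> w \<in> gAlice (G m)"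
  and bob_same_level:
    "v \<in> gBob (G m) \<Longrightarrow> w \<in> gV (G m) \<Longrightarrow> lev w = lev v \<Longrightarrow> w \<in> gBob (G m)"
  and bob_below_alice:
    "v \<in> gAlice (G m) \<Longrightarrow> w \<in> gV (G m) \<Longrightarrow> lev v = Suc (lev w) \<Longrightarrow> w \<in> gBob (G m)"
  and alice_below_bob:
    "v \<in> gBob (G m) \<Longrightarrow> w \<in> gV (G m) \<Longrightarrow> lev v = Suc (lev w) \<Longrightarrow> w \<in> gAlice (G m)"
  by (auto simp: gAlice_G gBob_G)

lemma gV_G_Suc: "v \<in> gV (G n) \<Longrightarrow> v \<in> gV (G (Suc n))"
  and gAlice_G_Suc: "v \<in> gAlice (G n) \<Longrightarrow> v \<in> gAlice (G (Suc n))"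
  and gBob_G_Suc: "v \<in> gBob (G n) \<Longrightarrow> v \<in> gBob (G (Suc n))"
  and gE_G_Suc: "e \<in> gE (G n) \<Longrightarrow> e \<in> gE (G (Suc n))"
  by (auto simp: gV_G gAlice_G gBob_G gE_G)

lemma gA_G_Suc: "(u, w) \<in> gA (G n) \<Longrightarrow> (u, w) \<in> gA (G (Suc n))"
  using gE_G_Suc gAlice_G_Suc unfolding gA_G_iff by blast

lemma gB_G_Suc: "(u, w) \<in> gB (G n) k \<Longrightarrow> (u, w) \<in> gB (G (Suc n)) k"
  using gE_G_Suc gBob_G_Suc unfolding gB_G_iff by blast

lemma gE_G_restrict: "(u, w) \<in> gE (G (Suc n)) \<Longrightarrow> lev w \<le> n \<Longrightarrow> (u, w) \<in> gE (G n)"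
  using edge_level[of u w "Suc n"] by (auto simp: gE_G gV_G)

lemma steptype_G_Suc: "steptype (G n) u w t \<Longrightarrow> steptype (G (Suc n)) u w t"
  by (cases t) (simp_all add: gA_G_Suc gB_G_Suc)

lemma steptype_up_edge: "steptype (G m) u w t \<Longrightarrow> is_up t \<Longrightarrow> (u, w) \<in> gE (G m)"
  by (cases t) (auto simp: is_up_def dest: gA_edge gB_edge)

lemma steptype_down_edge: "steptype (G m) u w t \<Longrightarrow> is_down t \<Longrightarrow> (w, u) \<in> gE (G m)"
  by (cases t) (auto simp: is_down_def dest: gA_edge gB_edge)

lemma steptype_up_level: "steptype (G m) u w t \<Longrightarrow> is_up t \<Longrightarrow> lev w = Suc (lev u)"
  using steptype_up_edge edge_level by blast

lemma steptype_down_level: "steptype (G m) u w t \<Longrightarrow> is_down t \<Longrightarrow> lev u = Suc (lev w)"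
  using steptype_down_edge edge_level by blast

lemma steptype_up_exists: "(u, w) \<in> gE (G m) \<Longrightarrow> \<exists>t. steptype (G m) u w t \<and> is_up t"
  using edge_cases[of u w m] unfolding is_up_def by (metis insertCI steptype.simps(1,3,5))

lemma steptype_down_exists: "(w, u) \<in> gE (G m) \<Longrightarrow> \<exists>t. steptype (G m) u w t \<and> is_down t"
  using edge_cases[of w u m] unfolding is_down_def by (metis insertCI steptype.simps(2,4,6))

lemma steptype_exists:
  "(u, w) \<in> gE (G m) \<or> (w, u) \<in> gE (G m) \<Longrightarrow> \<exists>t. steptype (G m) u w t"
  using steptype_up_exists steptype_down_exists by blast

lemma gA_not_gB: "(u, w) \<in> gA (G m) \<Longrightarrow> (u, w) \<notin> gB (G m') k"
  using gA_edge gB_edge alice_not_bob by blast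

lemma edge_not_reversed: "(u, w) \<in> gE (G m) \<Longrightarrow> (w, u) \<notin> gE (G m')"
  using edge_level[of u w m] edge_level[of w u m'] by auto

lemma steptype_unique:
  assumes "steptype (G m) u w t" "steptype (G m) u w t'"
  shows "t = t'"
proof -
  have A_E: "\<And>u w. (u, w) \<in> gA (G m) \<Longrightarrow> (u, w) \<in> gE (G m)"
    and B_E: "\<And>u w k. (u, w) \<in> gB (G m) k \<Longrightarrow> (u, w) \<in> gE (G m)"
    using gA_edge gB_edge by blast+
  have AB: "\<And>u w k. (u, w) \<in> gA (G m) \<Longrightarrow> (u, w) \<in> gB (G m) k \<Longrightarrow> False"
    using gA_not_gB by blast
  have B12: "\<And>u w. (u, w) \<in> gB (G m) 1 \<Longrightarrow> (u, w) \<in> gB (G m) 2 \<Longrightarrow> False"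
    using gB_1_2_disjoint by blast
  have rev: "\<And>u w. (u, w) \<in> gE (G m) \<Longrightarrow> (w, u) \<in> gE (G m) \<Longrightarrow> False"
    using edge_not_reversed by blast
  show ?thesis
    using assms
    by (cases t; cases t') (auto dest: AB rev A_E B_E B12[simplified])
qed

lemma locally_okI:
  assumes "steptype (G m) a b t" "steptype (G m) b c t'"
    and "b \<in> gV (G m) - gOut (G m) \<Longrightarrow> interior_ok t t'"
    and "b \<in> gOut (G m) \<Longrightarrow> boundary_ok t t'"
  shows "locally_ok (G m) a b c"
  using assms steptype_unique unfolding locally_ok_def by metis

lemma locally_ok_interiorI:
  "steptype (G m) a b t \<Longrightarrow> steptype (G m) b c t' \<Longrightarrow> b \<in> gV (G m) - gOut (G m) \<Longrightarrow>
     interior_ok t t' \<Longrightarrow> locally_ok (G m) a b c"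
  by (rule locally_okI) auto

lemma locally_ok_boundaryI:
  "steptype (G m) a b t \<Longrightarrow> steptype (G m) b c t' \<Longrightarrow> b \<in> gOut (G m) \<Longrightarrow>
     boundary_ok t t' \<Longrightarrow> locally_ok (G m) a b c"
  by (rule locally_okI) auto

lemma walk_levels_adjacent:
  assumes "is_walk (G m) p" "1 \<le> k" "k < length p"
  shows "lev (p!k) = Suc (lev (p!(k-1))) \<or> lev (p!(k-1)) = Suc (lev (p!k))"
  using assms unfolding is_walk_def by (auto dest: edge_level)

lemma step_up_iff:
  assumes "is_walk (G m) p"
  shows "step_up (G m) p k \<longleftrightarrow> 1 \<le> k \<and> k < length p \<and> lev (p!(k-1)) < lev (p!k)"
proof
  assume "step_up (G m) p k"
  then show "1 \<le> k \<and> k < length p \<and> lev (p!(k-1)) < lev (p!k)"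
    unfolding step_up_def step_def using steptype_up_level by fastforce
next
  assume k: "1 \<le> k \<and> k < length p \<and> lev (p!(k-1)) < lev (p!k)"
  then have "(p!(k-1), p!k) \<in> gE (G m)"
    using assms edge_level[of "p!k" "p!(k-1)" m] unfolding is_walk_def by force
  then show "step_up (G m) p k"
    using steptype_up_exists k unfolding step_up_def step_def by blast
qed

lemma step_down_iff:
  assumes "is_walk (G m) p"
  shows "step_down (G m) p k \<longleftrightarrow> 1 \<le> k \<and> k < length p \<and> lev (p!k) < lev (p!(k-1))"
proof
  assume "step_down (G m) p k"
  then show "1 \<le> k \<and> k < length p \<and> lev (p!k) < lev (p!(k-1))"
    unfolding step_down_def step_def using steptype_down_level by fastforce
next
  assume k: "1 \<le> k \<and> k < length p \<and> lev (p!k) < lev (p!(k-1))"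
  then have "(p!k, p!(k-1)) \<in> gE (G m)"
    using assms edge_level[of "p!(k-1)" "p!k" m] unfolding is_walk_def by force
  then show "step_down (G m) p k"
    using steptype_down_exists k unfolding step_down_def step_def by blast
qed

lemma Nset_eq_index_class:
  assumes walk: "is_walk (G m) p" and len: "2 \<le> length p" and s: "s \<le> 3"
  shows "Nset (G m) p s = {k. k < length p \<and> index_class lev p k = s}"
proof (rule set_eqI)
  fix k
  consider "k = 0" | "k = length p - 1" | "0 < k" "k < length p - 1" | "length p \<le> k"
    by linarith
  then show "k \<in> Nset (G m) p s \<longleftrightarrow> k \<in> {k. k < length p \<and> index_class lev p k = s}"
  proof cases
    case 3
    define a b c where "a = lev (p!(k-1))" and "b = lev (p!k)" and "c = lev (p!(k+1))"
    have "1 \<le> k" "k < length p" "1 \<le> k + 1" "k + 1 < length p" using 3 by auto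
    then have "a \<noteq> b" "b \<noteq> c"
      using walk_levels_adjacent[OF walk] unfolding a_def b_def c_def by (metis n_not_Suc_n, force)
    moreover have "step_up (G m) p k \<longleftrightarrow> a < b" "step_up (G m) p (k+1) \<longleftrightarrow> b < c"
      "step_down (G m) p k \<longleftrightarrow> b < a" "step_down (G m) p (k+1) \<longleftrightarrow> c < b"
      using 3 by (auto simp: step_up_iff[OF walk] step_down_iff[OF walk] a_def b_def c_def)
    moreover have "index_class lev p k = turn_class a b c"
      using 3 by (simp add: index_class_def a_def b_def c_def)
    ultimately show ?thesis
      using 3 s by (simp add: Nset_def Let_def turn_class_iff) linarith
  qed (use len s in \<open>auto simp: Nset_def Let_def index_class_def\<close>)
qed

lemma locally_ok_G_Suc:
  assumes "locally_ok (G n) a b c" "lev b < n"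
    and "(a, b) \<in> gE (G n) \<or> (b, a) \<in> gE (G n)" "(b, c) \<in> gE (G n) \<or> (c, b) \<in> gE (G n)"
  shows "locally_ok (G (Suc n)) a b c"
proof -
  obtain t1 t2 where t: "steptype (G n) a b t1" "steptype (G n) b c t2"
    using steptype_exists assms(3,4) by blast
  have "b \<in> gV (G n)" using assms(3) edge_level by blast
  then have "interior_ok t1 t2"
    using assms(1,2) t unfolding locally_ok_def by (auto simp: gOut_G)
  moreover have "b \<notin> gOut (G (Suc n))" using assms(2) by (simp add: gOut_G)
  ultimately show ?thesis
    using locally_okI[OF steptype_G_Suc[OF t(1)] steptype_G_Suc[OF t(2)]] by blast
qed

definition toom_walk :: "nat \<Rightarrow> ('a \<times> 'b) list \<Rightarrow> bool" where
  "toom_walk m p \<longleftrightarrow> is_walk (G m) p \<and> 3 \<le> length p \<and>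
     p!0 = root \<and> p!(length p - 1) = root \<and>
     (step (G m) p 1 SU \<or> step (G m) p 1 RU) \<and>
     (step (G m) p (length p - 1) SD \<or> step (G m) p (length p - 1) RD) \<and>
     (\<forall>k. 0 < k \<and> k < length p - 1 \<longrightarrow> locally_ok (G m) (p!(k-1)) (p!k) (p!(k+1))) \<and>
     (\<forall>k j. k < j \<and> j < length p \<longrightarrow> p!k = p!j \<longrightarrow>
        recurrence_ok (index_class lev p k) (index_class lev p j))"

lemma toom_cycle_if_toom_walk:
  assumes "toom_walk m p"
  shows "toom_cycle (G m) p"
proof -
  have walk: "is_walk (G m) p" and len: "3 \<le> length p"
    and loc: "\<And>k. 0 < k \<Longrightarrow> k < length p - 1 \<Longrightarrow> locally_ok (G m) (p!(k-1)) (p!k) (p!(k+1))"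
    and rec: "\<And>k j. k < j \<Longrightarrow> j < length p \<Longrightarrow> p!k = p!j \<Longrightarrow>
                 recurrence_ok (index_class lev p k) (index_class lev p j)"
    using assms unfolding toom_walk_def by blast+
  have N: "\<And>s. s \<le> 3 \<Longrightarrow> Nset (G m) p s = {k. k < length p \<and> index_class lev p k = s}"
    using Nset_eq_index_class[OF walk] len by simp
  have ast: "\<forall>k \<in> Nset (G m) p 3. \<forall>j \<in> Nset (G m) p 3. k \<noteq> j \<longrightarrow> p!k \<noteq> p!j"
  proof (intro ballI impI)
    fix k j assume "k \<in> Nset (G m) p 3" "j \<in> Nset (G m) p 3" "k \<noteq> j"
    then show "p!k \<noteq> p!j"
      using rec[of k j] rec[of j k] by (auto simp: N recurrence_ok_def nat_neq_iff)
  qed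
  have order: "\<forall>s t k j. s \<le> t \<and> t \<le> 2 \<and> k \<in> Nset (G m) p s \<and> j \<in> Nset (G m) p t \<and>
      p!k = p!j \<longrightarrow> k \<le> j"
  proof (intro allI impI, rule ccontr)
    fix s t k j
    assume "s \<le> t \<and> t \<le> 2 \<and> k \<in> Nset (G m) p s \<and> j \<in> Nset (G m) p t \<and> p!k = p!j"
      and "\<not> k \<le> j"
    then show False using rec[of j k] by (auto simp: N recurrence_ok_def)
  qed
  have interior: "\<forall>k t1 t2. 0 < k \<and> k < length p - 1 \<and> p!k \<in> gV (G m) - gOut (G m) \<and>
      step (G m) p k t1 \<and> step (G m) p (k+1) t2 \<longrightarrow> interior_ok t1 t2"
    and boundary: "\<forall>k t1 t2. 0 < k \<and> k < length p - 1 \<and> p!k \<in> gOut (G m) \<and>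
      step (G m) p k t1 \<and> step (G m) p (k+1) t2 \<longrightarrow> boundary_ok t1 t2"
    using loc unfolding locally_ok_def step_def by auto
  have ends: "p!0 = root" "p!(length p - 1) = root"
    "step (G m) p 1 SU \<or> step (G m) p 1 RU"
    "step (G m) p (length p - 1) SD \<or> step (G m) p (length p - 1) RD"
    using assms unfolding toom_walk_def by blast+
  have "2 \<le> length p - 1" using len by linarith
  then show ?thesis
    unfolding toom_cycle_def Let_def groot_G
    using walk ends ast order interior boundary by (intro conjI) assumption+
qed

definition toom_walk_present :: "nat \<Rightarrow> ('a \<times> 'b \<Rightarrow> nat) \<Rightarrow> bool" where
  "toom_walk_present m x \<longleftrightarrow>
     (\<exists>p. toom_walk m p \<and> (\<forall>k < length p. p!k \<in> gOut (G m) \<longrightarrow> x (p!k) = 0))"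

end

section \<open>Refining a Toom cycle by one level\<close>

locale toom_refinement = product_game +
  fixes n :: nat and q :: "('a \<times> 'b) list" and x :: "'a \<times> 'b \<Rightarrow> nat"
  assumes n_pos: "1 \<le> n" and q_toom_walk: "toom_walk n q"
    and alice_wins_above:
      "\<And>k. k < length q \<Longrightarrow> q!k \<in> gOut (G n) \<Longrightarrow> q!k \<in> gAlice (G (Suc n)) \<Longrightarrow>
         \<exists>u. (q!k, u) \<in> gA (G (Suc n)) \<and> x u = 0"
    and bob_loses_above:
      "\<And>k u. k < length q \<Longrightarrow> q!k \<in> gOut (G n) \<Longrightarrow> q!k \<in> gBob (G (Suc n)) \<Longrightarrow>
         (q!k, u) \<in> gE (G (Suc n)) \<Longrightarrow> x u = 0"
begin

lemma q_walk: "is_walk (G n) q"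
  and q_length: "3 \<le> length q"
  and q_first: "q!0 = root"
  and q_last: "q!(length q - 1) = root"
  and q_first_step: "step (G n) q 1 SU \<or> step (G n) q 1 RU"
  and q_last_step: "step (G n) q (length q - 1) SD \<or> step (G n) q (length q - 1) RD"
  using q_toom_walk unfolding toom_walk_def by blast+

lemma q_locally_ok:
  "0 < k \<Longrightarrow> k < length q - 1 \<Longrightarrow> locally_ok (G n) (q!(k-1)) (q!k) (q!(k+1))"
  using q_toom_walk unfolding toom_walk_def by blast

lemma q_recurrence:
  "k < j \<Longrightarrow> j < length q \<Longrightarrow> q!k = q!j \<Longrightarrow>
     recurrence_ok (index_class lev q k) (index_class lev q j)"
  using q_toom_walk unfolding toom_walk_def by blast

lemma q_edge:
  "1 \<le> k \<Longrightarrow> k < length q \<Longrightarrow> (q!(k-1), q!k) \<in> gE (G n) \<or> (q!k, q!(k-1)) \<in> gE (G n)"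
  using q_walk unfolding is_walk_def by blast

lemma q_in_gV: "k < length q \<Longrightarrow> q!k \<in> gV (G n)"
  using q_edge[of "Suc k"] q_edge[of k] q_length edge_level
  by (cases "k = 0") (fastforce, fastforce)

lemma q_in_gV_Suc: "k < length q \<Longrightarrow> q!k \<in> gV (G (Suc n))"
  using q_in_gV gV_G_Suc by blast

lemma q_level: "k < length q \<Longrightarrow> lev (q!k) \<le> n"
  using q_in_gV by (simp add: gV_G)

definition at_top :: "nat \<Rightarrow> bool" where
  "at_top i \<longleftrightarrow> 0 < i \<and> i < length q - 1 \<and> lev (q!i) = n"

lemma at_top_bounds: "at_top i \<Longrightarrow> 0 < i \<and> i + 1 < length q"
  unfolding at_top_def by linarith

lemma at_top_neighbours:
  assumes "at_top i"
  shows "Suc (lev (q!(i-1))) = n" "Suc (lev (q!(i+1))) = n"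
proof -
  have i: "0 < i" "i + 1 < length q" "lev (q!i) = n" "i - 1 < length q"
    using assms unfolding at_top_def by auto
  show "Suc (lev (q!(i-1))) = n"
    using walk_levels_adjacent[OF q_walk, of i] i q_level[OF i(4)] by auto
  show "Suc (lev (q!(i+1))) = n"
    using walk_levels_adjacent[OF q_walk, of "i+1"] i q_level[of "i+1"] by auto
qed

lemma level_below_top:
  assumes "k < length q" "\<not> at_top k"
  shows "lev (q!k) < n"
proof -
  consider "k = 0" | "k = length q - 1" | "0 < k \<and> k < length q - 1" using assms by linarith
  then show ?thesis
    using assms q_first q_last lev_root n_pos q_level[of k] unfolding at_top_def by cases auto
qed

lemma index_class_at_top: "at_top i \<Longrightarrow> index_class lev q i = 3"
  using at_top_neighbours unfolding at_top_def index_class_def turn_class_def by fastforce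

lemma at_top_inj:
  assumes "at_top i" "at_top j" "q!i = q!j"
  shows "i = j"
proof (rule ccontr)
  assume "i \<noteq> j"
  moreover have "i < length q" "j < length q" using assms unfolding at_top_def by auto
  ultimately show False
    using q_recurrence[of i j] q_recurrence[of j i] assms index_class_at_top
    by (auto simp: recurrence_ok_def nat_neq_iff)
qed

lemma at_top_outcome: "at_top i \<Longrightarrow> q!i \<in> gOut (G n)"
  using q_in_gV[of i] unfolding at_top_def by (auto simp: gOut_G)

lemma at_top_interior: "at_top i \<Longrightarrow> q!i \<in> gV (G (Suc n)) - gOut (G (Suc n))"
  using q_in_gV_Suc[of i] unfolding at_top_def by (auto simp: gOut_G)

lemma at_top_level: "at_top i \<Longrightarrow> lev (q!i) = n"
  unfolding at_top_def by simp

lemma at_top_owner: "at_top i \<Longrightarrow> q!i \<in> gAlice (G (Suc n)) \<or> q!i \<in> gBob (G (Suc n))"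
  using at_top_interior at_top_level interior_owner by simp

lemma at_top_same_owner:
  "at_top i \<Longrightarrow> at_top j \<Longrightarrow> q!i \<in> gAlice (G (Suc n)) \<Longrightarrow> q!j \<in> gAlice (G (Suc n))"
  "at_top i \<Longrightarrow> at_top j \<Longrightarrow> q!i \<in> gBob (G (Suc n)) \<Longrightarrow> q!j \<in> gBob (G (Suc n))"
  using alice_same_level bob_same_level at_top_interior at_top_level by (metis DiffD1)+

lemma at_top_neighbour_owner:
  assumes "at_top i"
  shows "q!i \<in> gAlice (G (Suc n)) \<Longrightarrow> q!(i-1) \<in> gBob (G (Suc n)) \<and> q!(i+1) \<in> gBob (G (Suc n))"
    and "q!i \<in> gBob (G (Suc n)) \<Longrightarrow> q!(i-1) \<in> gAlice (G (Suc n)) \<and> q!(i+1) \<in> gAlice (G (Suc n))"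
proof -
  have "q!(i-1) \<in> gV (G (Suc n))" "q!(i+1) \<in> gV (G (Suc n))"
    using assms q_in_gV_Suc unfolding at_top_def by auto
  then show "q!i \<in> gAlice (G (Suc n)) \<Longrightarrow> q!(i-1) \<in> gBob (G (Suc n)) \<and> q!(i+1) \<in> gBob (G (Suc n))"
    and "q!i \<in> gBob (G (Suc n)) \<Longrightarrow> q!(i-1) \<in> gAlice (G (Suc n)) \<and> q!(i+1) \<in> gAlice (G (Suc n))"
    using bob_below_alice alice_below_bob at_top_neighbours[OF assms] at_top_level[OF assms]
    by auto
qed

lemma q_edge_Suc:
  "1 \<le> k \<Longrightarrow> k < length q \<Longrightarrow>
     (q!(k-1), q!k) \<in> gE (G (Suc n)) \<or> (q!k, q!(k-1)) \<in> gE (G (Suc n))"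
  using q_edge gE_G_Suc by blast

lemma q_locally_ok_Suc:
  assumes "0 < k" "k < length q - 1" "\<not> at_top k"
  shows "locally_ok (G (Suc n)) (q!(k-1)) (q!k) (q!(k+1))"
  using locally_ok_G_Suc[OF q_locally_ok level_below_top] q_edge[of k] q_edge[of "k+1"] assms
  by simp

lemma q_edge_up_to_top:
  assumes "at_top i"
  shows "(q!(i-1), q!i) \<in> gE (G (Suc n))"
proof -
  have "1 \<le> i" "i < length q" using assms by (auto simp: at_top_def)
  then have "(q!(i-1), q!i) \<in> gE (G (Suc n)) \<or> (q!i, q!(i-1)) \<in> gE (G (Suc n))"
    by (rule q_edge_Suc)
  moreover have "lev (q!i) = Suc (lev (q!(i-1)))"
    using at_top_neighbours(1)[OF assms] at_top_level[OF assms] by simp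
  ultimately show ?thesis using edge_level by fastforce
qed

lemma q_edge_down_from_top:
  assumes "at_top i"
  shows "(q!(i+1), q!i) \<in> gE (G (Suc n))"
proof -
  have "1 \<le> i + 1" "i + 1 < length q" using assms by (auto simp: at_top_def)
  then have "(q!i, q!(i+1)) \<in> gE (G (Suc n)) \<or> (q!(i+1), q!i) \<in> gE (G (Suc n))"
    using q_edge_Suc by fastforce
  moreover have "lev (q!i) = Suc (lev (q!(i+1)))"
    using at_top_neighbours(2)[OF assms] at_top_level[OF assms] by simp
  ultimately show ?thesis using edge_level by fastforce
qed

(* An initial segment of the refined cycle; its first step is copied from q. *)
definition partial_cycle :: "('a \<times> 'b) list \<Rightarrow> bool" where
  "partial_cycle p \<longleftrightarrow> is_walk (G (Suc n)) p \<and> p!0 = root \<and>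
     (\<forall>k. 0 < k \<and> k < length p - 1 \<longrightarrow> locally_ok (G (Suc n)) (p!(k-1)) (p!k) (p!(k+1))) \<and>
     (\<forall>k j. k < j \<and> j < length p - 1 \<longrightarrow> p!k = p!j \<longrightarrow>
        recurrence_ok (index_class lev p k) (index_class lev p j)) \<and>
     (\<forall>k < length p. p!k \<in> gOut (G (Suc n)) \<longrightarrow> x (p!k) = 0) \<and>
     (2 \<le> length p \<longrightarrow> p!1 = q!1)"

lemma partial_cycle_snoc:
  assumes pc: "partial_cycle p" and inv: "earlier_entries P lev p"
    and edge: "(p!(length p - 1), z) \<in> gE (G (Suc n)) \<or> (z, p!(length p - 1)) \<in> gE (G (Suc n))"
    and loc: "1 < length p \<Longrightarrow> locally_ok (G (Suc n)) (p!(length p - 2)) (p!(length p - 1)) z"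
    and rec: "\<And>c. P (p!(length p - 1)) c \<Longrightarrow>
                 recurrence_ok c (index_class lev (p @ [z]) (length p - 1))"
    and out: "z \<in> gOut (G (Suc n)) \<Longrightarrow> x z = 0"
    and second: "length p = 1 \<Longrightarrow> z = q!1"
    and new: "Q (p!(length p - 1)) (index_class lev (p @ [z]) (length p - 1))"
    and weaker: "\<And>v c. P v c \<Longrightarrow> Q v c"
  shows "partial_cycle (p @ [z]) \<and> earlier_entries Q lev (p @ [z])"
proof -
  have walk: "is_walk (G (Suc n)) p" and ne: "p \<noteq> []" and first: "p!0 = root"
    and locs: "\<forall>k. 0 < k \<and> k < length p - 1 \<longrightarrow> locally_ok (G (Suc n)) (p!(k-1)) (p!k) (p!(k+1))"
    and recs: "\<forall>k j. k < j \<and> j < length p - 1 \<longrightarrow> p!k = p!j \<longrightarrow>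
                 recurrence_ok (index_class lev p k) (index_class lev p j)"
    and outs: "\<forall>k < length p. p!k \<in> gOut (G (Suc n)) \<longrightarrow> x (p!k) = 0"
    and seconds: "2 \<le> length p \<longrightarrow> p!1 = q!1"
    using pc unfolding partial_cycle_def is_walk_def by blast+
  have "is_walk (G (Suc n)) (p @ [z])"
    using is_walk_snoc[OF walk] edge ne by (simp add: last_conv_nth)
  moreover have "\<forall>k. 0 < k \<and> k < length (p @ [z]) - 1 \<longrightarrow>
      locally_ok (G (Suc n)) ((p @ [z])!(k-1)) ((p @ [z])!k) ((p @ [z])!(k+1))"
    using triples_snoc[OF locs loc] .
  moreover have "\<forall>k j. k < j \<and> j < length (p @ [z]) - 1 \<longrightarrow> (p @ [z])!k = (p @ [z])!j \<longrightarrow>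
      recurrence_ok (index_class lev (p @ [z]) k) (index_class lev (p @ [z]) j)"
    using recurrences_snoc[OF recs] rec earlier_entriesD[OF inv] by metis
  moreover have "\<forall>k < length (p @ [z]). (p @ [z])!k \<in> gOut (G (Suc n)) \<longrightarrow> x ((p @ [z])!k) = 0"
    using outs out by (auto simp: nth_append less_Suc_eq)
  moreover have "2 \<le> length (p @ [z]) \<longrightarrow> (p @ [z])!1 = q!1"
    using seconds second ne by (cases "length p = 1") (auto simp: nth_append)
  ultimately have "partial_cycle (p @ [z])"
    using first ne unfolding partial_cycle_def by (simp add: nth_append)
  then show ?thesis using earlier_entries_snoc[of P lev p Q z, OF inv ne new weaker] by blast
qed

definition top_parents :: "'a \<times> 'b \<Rightarrow> nat set" where
  "top_parents w = {i. at_top i \<and> (q!i, w) \<in> gE (G (Suc n))}"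

lemma top_parents_finite: "finite (top_parents w)"
  by (rule finite_subset[of _ "{..<length q}"]) (auto simp: top_parents_def at_top_def)

(* The entries the refined walk may contain once q has been copied up to index m: earlier
   vertices of q below level n with their class in q, earlier vertices of q at level n with any
   class, and vertices of level n+1 all of whose parents on q are visited before index m. *)
definition settled :: "nat \<Rightarrow> 'a \<times> 'b \<Rightarrow> nat \<Rightarrow> bool" where
  "settled m v c \<longleftrightarrow>
     (\<exists>r<m. \<not> at_top r \<and> r < length q \<and> v = q!r \<and> c = index_class lev q r) \<or>
     (\<exists>r<m. at_top r \<and> v = q!r) \<or>
     (lev v = Suc n \<and> (\<forall>r \<in> top_parents v. r < m))"

lemma settled_mono:
  assumes "settled m v c" "m \<le> m'"
  shows "settled m' v c"
proof -
  have "\<And>r. r < m \<Longrightarrow> r < m'" using assms(2) by simp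
  then show ?thesis using assms(1) unfolding settled_def by blast
qed

lemma settled_recurrence:
  assumes "settled m (q!m) c" "m < length q" "\<not> at_top m"
  shows "recurrence_ok c (index_class lev q m)"
proof -
  have "lev (q!m) < n" using level_below_top assms(2,3) .
  then obtain r where "r < m" "q!m = q!r" "c = index_class lev q r"
    using assms(1) at_top_level unfolding settled_def by force
  then show ?thesis using q_recurrence[of r m] assms(2) by simp
qed

lemma settled_not_top:
  assumes "settled m v c" "m \<le> j" "at_top j"
  shows "v \<noteq> q!j"
proof
  assume v: "v = q!j"
  have j: "lev (q!j) = n" using at_top_level[OF assms(3)] .
  show False
    using assms(1) unfolding settled_def
  proof (elim disjE exE conjE)
    fix r assume "\<not> at_top r" "r < length q" "v = q!r"
    then show False using level_below_top[of r] v j by simp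
  next
    fix r assume "r < m" "at_top r" "v = q!r"
    then show False using at_top_inj[of r j] assms(2,3) v by simp
  next
    assume "lev v = Suc n"
    then show False using v j by simp
  qed
qed

lemma settled_not_above:
  assumes "settled m v c" "r \<in> top_parents w" "m \<le> r" "lev w = Suc n"
  shows "v \<noteq> w"
proof
  assume v: "v = w"
  show False
    using assms(1) unfolding settled_def
  proof (elim disjE exE conjE)
    fix r' assume "r' < length q" "v = q!r'"
    then show False using q_level[of r'] v assms(4) by simp
  next
    fix r' assume "at_top r'" "v = q!r'"
    then show False using at_top_level v assms(4) by simp
  next
    assume "\<forall>r \<in> top_parents v. r < m"
    then show False using assms(2,3) v by auto
  qed
qed

(* Having climbed from q!c, the walk has visited q!c with class 0; turning at Bob's first
   child adds a visit of class 1, and that child itself. *)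
definition top_child_entry :: "nat \<Rightarrow> 'a \<times> 'b \<Rightarrow> nat \<Rightarrow> bool" where
  "top_child_entry c v cl \<longleftrightarrow> settled c v cl \<or> (v = q!c \<and> cl = 0)"

definition second_child_entry :: "nat \<Rightarrow> 'a \<times> 'b \<Rightarrow> nat \<Rightarrow> bool" where
  "second_child_entry c v cl \<longleftrightarrow> settled c v cl \<or> (v = q!c \<and> cl \<le> 1) \<or>
     (lev v = Suc n \<and> (\<forall>r \<in> top_parents v. r \<le> c) \<and> v \<noteq> bob_child 2 (q!c))"

lemma descent_target:
  assumes "at_top c" "(q!c, t) \<in> gE (G (Suc n))"
  obtains j where "at_top j" "(q!j, t) \<in> gE (G (Suc n))" "c \<le> j"
    "\<And>r. r \<in> top_parents t \<Longrightarrow> r \<le> j"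
proof -
  have c: "c \<in> top_parents t" using assms unfolding top_parents_def by simp
  then have "Max (top_parents t) \<in> top_parents t" "c \<le> Max (top_parents t)"
    "\<And>r. r \<in> top_parents t \<Longrightarrow> r \<le> Max (top_parents t)"
    using Max_in[OF top_parents_finite] Max_ge[OF top_parents_finite] by blast+
  then show ?thesis using that unfolding top_parents_def by blast
qed

lemma top_child_entry_not_child:
  assumes "top_child_entry c v cl" "at_top c" "(q!c, t) \<in> gE (G (Suc n))"
  shows "v \<noteq> t"
proof -
  have "c \<in> top_parents t" using assms(2,3) unfolding top_parents_def by simp
  moreover have "lev t = Suc n" using edge_to_outcome[OF assms(3) at_top_level[OF assms(2)]] by simp
  ultimately show ?thesis
    using assms(1) settled_not_above[of c v cl c t] at_top_level[OF assms(2)]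
    unfolding top_child_entry_def by auto
qed

lemma top_child_entry_at_top:
  "top_child_entry c (q!j) cl \<Longrightarrow> c \<le> j \<Longrightarrow> at_top j \<Longrightarrow> q!j = q!c \<and> cl = 0"
  using settled_not_top unfolding top_child_entry_def by blast

lemma settled_if_top_child_entry:
  assumes "top_child_entry c v cl" "at_top c" "c \<le> j"
  shows "settled (j+1) v cl"
  using assms(1) unfolding top_child_entry_def
proof
  assume "settled c v cl"
  then show ?thesis using settled_mono assms(3) by simp
next
  assume "v = q!c \<and> cl = 0"
  then show ?thesis
    unfolding settled_def using assms(2,3) by (intro disjI2 disjI1 exI[of _ c]) simp
qed

lemma second_child_entry_not_child:
  assumes entry: "second_child_entry c v cl" and c: "at_top c" "q!c \<in> gBob (G (Suc n))"
  shows "v \<noteq> bob_child 2 (q!c)"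
proof -
  have e: "(q!c, bob_child 2 (q!c)) \<in> gE (G (Suc n))" using bob_child_edge[OF c(2)] gB_edge by blast
  then have cP: "c \<in> top_parents (bob_child 2 (q!c))" using c(1) unfolding top_parents_def by simp
  have lc: "lev (q!c) = n" using at_top_level[OF c(1)] .
  then have lz: "lev (bob_child 2 (q!c)) = Suc n" using edge_to_outcome[OF e] by simp
  show ?thesis
    using entry unfolding second_child_entry_def
  proof (elim disjE conjE)
    assume "settled c v cl"
    then show ?thesis using settled_not_above[OF _ cP order_refl lz] by simp
  next
    assume "v = q!c"
    then show ?thesis using lc lz by auto
  qed
qed

lemma second_child_entry_at_top:
  "second_child_entry c (q!j) cl \<Longrightarrow> c \<le> j \<Longrightarrow> at_top j \<Longrightarrow> q!j = q!c \<and> cl \<le> 1"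
  using settled_not_top at_top_level unfolding second_child_entry_def by fastforce

lemma settled_if_second_child_entry:
  assumes "second_child_entry c v cl" "at_top c"
  shows "settled (c+1) v cl"
  using assms(1) unfolding second_child_entry_def
proof (elim disjE conjE)
  assume "settled c v cl"
  then show ?thesis using settled_mono by simp
next
  assume "v = q!c"
  then show ?thesis
    unfolding settled_def using assms(2) by (intro disjI2 disjI1 exI[of _ c]) simp
next
  assume "lev v = Suc n" "\<forall>r \<in> top_parents v. r \<le> c"
  then show ?thesis unfolding settled_def by (simp add: less_Suc_eq_le)
qed

lemma second_child_entry_shift:
  assumes entry: "second_child_entry c v cl" and c: "at_top c" and j: "at_top j" "c < j"
    and bob: "q!j \<in> gBob (G (Suc n))"
  shows "second_child_entry j v cl"
proof -
  consider "settled c v cl" | "v = q!c" "cl \<le> 1"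
    | "lev v = Suc n" "\<forall>r \<in> top_parents v. r \<le> c" "v \<noteq> bob_child 2 (q!c)"
    using entry unfolding second_child_entry_def by blast
  then show ?thesis
  proof cases
    case 1
    then show ?thesis using settled_mono j(2) unfolding second_child_entry_def by fastforce
  next
    case 2
    then have "settled j v cl" using c j(2) at_top_bounds[OF c] unfolding settled_def by auto
    then show ?thesis unfolding second_child_entry_def by blast
  next
    case 3
    have "(q!j, bob_child 2 (q!j)) \<in> gE (G (Suc n))" using bob_child_edge[OF bob] gB_edge by blast
    then have "v \<noteq> bob_child 2 (q!j)" using 3(2) j unfolding top_parents_def by fastforce
    then show ?thesis using 3 j(2) unfolding second_child_entry_def by fastforce
  qed
qed

(* The stages of the construction: copying q up to q!m; having climbed from the visit q!c of
   level n (at Bob's turn to his first child); having turned to Bob's second child of q!c. *)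
definition copying :: "nat \<Rightarrow> ('a \<times> 'b) list \<Rightarrow> bool" where
  "copying m p \<longleftrightarrow> partial_cycle p \<and> m < length q \<and> \<not> at_top m \<and> p!(length p - 1) = q!m \<and>
     (m = 0 \<longrightarrow> p = [root]) \<and> (0 < m \<longrightarrow> 2 \<le> length p \<and> p!(length p - 2) = q!(m-1)) \<and>
     earlier_entries (settled m) lev p"

definition above_top :: "nat \<Rightarrow> ('a \<times> 'b) list \<Rightarrow> bool" where
  "above_top c p \<longleftrightarrow> partial_cycle p \<and> at_top c \<and> 2 \<le> length p \<and> p!(length p - 2) = q!c \<and>
     (q!c, p!(length p - 1)) \<in> gE (G (Suc n)) \<and>
     (q!c \<in> gBob (G (Suc n)) \<longrightarrow> p!(length p - 1) = bob_child 1 (q!c)) \<and>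
     earlier_entries (top_child_entry c) lev p"

definition at_second_child :: "nat \<Rightarrow> ('a \<times> 'b) list \<Rightarrow> bool" where
  "at_second_child c p \<longleftrightarrow> partial_cycle p \<and> at_top c \<and> q!c \<in> gBob (G (Suc n)) \<and>
     2 \<le> length p \<and> p!(length p - 2) = q!c \<and> p!(length p - 1) = bob_child 2 (q!c) \<and>
     earlier_entries (second_child_entry c) lev p"

lemma copying_start: "copying 0 [root]"
proof -
  have "root \<notin> gOut (G (Suc n))" using lev_root by (simp add: gOut_G)
  then have "partial_cycle [root]" unfolding partial_cycle_def is_walk_def by auto
  then show ?thesis
    using q_length q_first unfolding copying_def at_top_def earlier_entries_def by auto
qed

lemma copying_snoc:
  assumes st: "copying m p" and m: "m + 1 < length q"
  shows "partial_cycle (p @ [q!(m+1)]) \<and> earlier_entries (settled (m+1)) lev (p @ [q!(m+1)]) \<and>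
    index_class lev (p @ [q!(m+1)]) (length p - 1) = index_class lev q m"
proof -
  have pc: "partial_cycle p" and top: "\<not> at_top m" and last: "p!(length p - 1) = q!m"
    and start: "m = 0 \<Longrightarrow> p = [root]"
    and prev: "0 < m \<Longrightarrow> 2 \<le> length p \<and> p!(length p - 2) = q!(m-1)"
    and inv: "earlier_entries (settled m) lev p"
    using st unfolding copying_def by blast+
  have cls: "index_class lev (p @ [q!(m+1)]) (length p - 1) = index_class lev q m"
  proof (cases "m = 0")
    case True
    then show ?thesis using start by (simp add: index_class_def)
  next
    case False
    then have len: "1 < length p" and "p!(length p - 2) = q!(m-1)" using prev by auto
    then have "index_class lev (p @ [q!(m+1)]) (length p - 1) =
        turn_class (lev (q!(m-1))) (lev (q!m)) (lev (q!(m+1)))"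
      using index_class_snoc_last[OF len, of lev "q!(m+1)"] last by simp
    moreover have "m \<noteq> length q - 1" using m by simp
    then have "index_class lev q m = turn_class (lev (q!(m-1))) (lev (q!m)) (lev (q!(m+1)))"
      using False by (simp add: index_class_def)
    ultimately show ?thesis by simp
  qed
  have "partial_cycle (p @ [q!(m+1)]) \<and> earlier_entries (settled (m+1)) lev (p @ [q!(m+1)])"
  proof (rule partial_cycle_snoc[OF pc inv])
    show "(p!(length p - 1), q!(m+1)) \<in> gE (G (Suc n)) \<or>
        (q!(m+1), p!(length p - 1)) \<in> gE (G (Suc n))"
      using q_edge_Suc[of "m+1"] m last by simp
    show "locally_ok (G (Suc n)) (p!(length p - 2)) (p!(length p - 1)) (q!(m+1))" if "1 < length p"
      using that start prev last q_locally_ok_Suc[of m] top m by (cases "m = 0") auto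
    show "recurrence_ok c (index_class lev (p @ [q!(m+1)]) (length p - 1))"
      if "settled m (p!(length p - 1)) c" for c
      using that settled_recurrence top m last cls by simp
    show "x (q!(m+1)) = 0" if "q!(m+1) \<in> gOut (G (Suc n))"
      using that q_level[of "m+1"] m by (simp add: gOut_G)
    show "q!(m+1) = q!1" if "length p = 1"
      using that prev by (cases "m = 0") auto
    show "settled (m+1) (p!(length p - 1)) (index_class lev (p @ [q!(m+1)]) (length p - 1))"
      using last cls top m unfolding settled_def by auto
  qed (rule settled_mono, auto)
  then show ?thesis using cls by blast
qed

lemma copying_step:
  assumes "copying m p" "m + 1 < length q" "\<not> at_top (m+1)"
  shows "copying (m+1) (p @ [q!(m+1)])"
  using copying_snoc[OF assms(1,2)] assms unfolding copying_def
  by (auto simp: nth_append)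

lemma copying_to_top_child:
  assumes st: "copying m p" and top: "at_top (m+1)"
    and edge: "(q!(m+1), z) \<in> gE (G (Suc n))"
    and loc: "locally_ok (G (Suc n)) (q!m) (q!(m+1)) z"
    and out: "z \<in> gOut (G (Suc n)) \<Longrightarrow> x z = 0"
  shows "partial_cycle (p @ [q!(m+1), z]) \<and>
    earlier_entries (top_child_entry (m+1)) lev (p @ [q!(m+1), z])"
proof -
  have m: "m + 1 < length q" using top by (auto simp: at_top_def)
  have ne: "p \<noteq> []" and last: "p!(length p - 1) = q!m"
    using st unfolding copying_def partial_cycle_def is_walk_def by blast+
  let ?p = "p @ [q!(m+1)]"
  have pc: "partial_cycle ?p" and inv: "earlier_entries (settled (m+1)) lev ?p"
    using copying_snoc[OF st m] by blast+
  have len: "1 < length ?p" and ends: "?p!(length ?p - 2) = q!m" "?p!(length ?p - 1) = q!(m+1)"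
    using ne last by (auto simp: nth_append)
  have lz: "lev z = Suc n" using edge_to_outcome[OF edge at_top_level[OF top]] by simp
  have cls: "index_class lev (?p @ [z]) (length ?p - 1) = 0"
    using index_class_snoc_last[OF len, of lev z] ends lz at_top_level[OF top]
      at_top_neighbours(1)[OF top] by (simp add: turn_class_def)
  have eq: "p @ [q!(m+1), z] = ?p @ [z]" by simp
  show ?thesis
    unfolding eq
  proof (rule partial_cycle_snoc[OF pc inv])
    show "(?p!(length ?p - 1), z) \<in> gE (G (Suc n)) \<or> (z, ?p!(length ?p - 1)) \<in> gE (G (Suc n))"
      using edge ends by simp
    show "locally_ok (G (Suc n)) (?p!(length ?p - 2)) (?p!(length ?p - 1)) z"
      using loc ends by simp
    show "recurrence_ok c (index_class lev (?p @ [z]) (length ?p - 1))"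
      if "settled (m+1) (?p!(length ?p - 1)) c" for c
      using that settled_not_top[OF _ order_refl top] ends(2) by metis
    show "length ?p = 1 \<Longrightarrow> z = q!1" using len by simp
    show "top_child_entry (m+1) (?p!(length ?p - 1)) (index_class lev (?p @ [z]) (length ?p - 1))"
      using cls ends unfolding top_child_entry_def by simp
  qed (use out in \<open>auto simp: top_child_entry_def\<close>)
qed

lemma copying_to_above_top:
  assumes st: "copying m p" and top: "at_top (m+1)"
  shows "\<exists>z. above_top (m+1) (p @ [q!(m+1), z])"
proof -
  have m: "m + 1 < length q" using top by (auto simp: at_top_def)
  have ne: "p \<noteq> []" using st unfolding copying_def partial_cycle_def is_walk_def by blast
  have up: "(q!m, q!(m+1)) \<in> gE (G (Suc n))" using q_edge_up_to_top[OF top] by simp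
  have inner: "q!(m+1) \<in> gV (G (Suc n)) - gOut (G (Suc n))" using at_top_interior[OF top] .
  have "\<exists>z. (q!(m+1), z) \<in> gE (G (Suc n)) \<and> locally_ok (G (Suc n)) (q!m) (q!(m+1)) z \<and>
      (z \<in> gOut (G (Suc n)) \<longrightarrow> x z = 0) \<and>
      (q!(m+1) \<in> gBob (G (Suc n)) \<longrightarrow> z = bob_child 1 (q!(m+1)))"
  proof (cases "q!(m+1) \<in> gAlice (G (Suc n))")
    case True
    then obtain u where u: "(q!(m+1), u) \<in> gA (G (Suc n))" "x u = 0"
      using alice_wins_above[OF m at_top_outcome[OF top]] by blast
    have "q!m \<in> gBob (G (Suc n))" using at_top_neighbour_owner(1)[OF top True] by simp
    then have "steptype (G (Suc n)) (q!m) (q!(m+1)) RU \<or> steptype (G (Suc n)) (q!m) (q!(m+1)) LU"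
      using edge_from_bob[OF up] by auto
    moreover have "steptype (G (Suc n)) (q!(m+1)) u SU" using u(1) by simp
    ultimately have "locally_ok (G (Suc n)) (q!m) (q!(m+1)) u"
      using locally_ok_interiorI[OF _ _ inner] by (metis interior_ok_def insertCI)
    then show ?thesis using u gA_edge True alice_not_bob by blast
  next
    case False
    then have bob: "q!(m+1) \<in> gBob (G (Suc n))" using at_top_owner[OF top] by blast
    let ?z = "bob_child 1 (q!(m+1))"
    have e: "(q!(m+1), ?z) \<in> gB (G (Suc n)) 1" using bob_child_edge[OF bob] by simp
    have "q!m \<in> gAlice (G (Suc n))" using at_top_neighbour_owner(2)[OF top bob] by simp
    then have "locally_ok (G (Suc n)) (q!m) (q!(m+1)) ?z"
      using locally_ok_interiorI[OF _ _ inner, of "q!m" SU ?z RU] e up edge_from_alice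
      by (simp add: interior_ok_def)
    moreover have "x ?z = 0"
      using bob_loses_above[OF m at_top_outcome[OF top] bob] e gB_edge by blast
    ultimately show ?thesis using e gB_edge by blast
  qed
  then obtain z where z: "(q!(m+1), z) \<in> gE (G (Suc n))" "locally_ok (G (Suc n)) (q!m) (q!(m+1)) z"
      "z \<in> gOut (G (Suc n)) \<Longrightarrow> x z = 0" "q!(m+1) \<in> gBob (G (Suc n)) \<Longrightarrow> z = bob_child 1 (q!(m+1))"
    by blast
  then have "above_top (m+1) (p @ [q!(m+1), z])"
    using copying_to_top_child[OF st top z(1,2)] top ne unfolding above_top_def
    by (auto simp: nth_append)
  then show ?thesis ..
qed

lemma descend_to_top:
  assumes pc: "partial_cycle p" and inv: "earlier_entries P lev p" and len: "2 \<le> length p"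
    and t: "p!(length p - 1) = t" "lev t = Suc n" and prev: "lev (p!(length p - 2)) = n"
    and j: "at_top j" "(q!j, t) \<in> gE (G (Suc n))"
    and loc: "locally_ok (G (Suc n)) (p!(length p - 2)) t (q!j)"
    and fresh: "\<And>v c. P v c \<Longrightarrow> v \<noteq> t"
  shows "partial_cycle (p @ [q!j]) \<and>
    earlier_entries (\<lambda>v c. P v c \<or> (v = t \<and> c = 3)) lev (p @ [q!j])"
proof (rule partial_cycle_snoc[OF pc inv, where Q = "\<lambda>v c. P v c \<or> (v = t \<and> c = 3)"])
  have "1 < length p" using len by simp
  then show "(\<lambda>v c. P v c \<or> (v = t \<and> c = 3)) (p!(length p - 1))
      (index_class lev (p @ [q!j]) (length p - 1))"
    using index_class_snoc_last[of p lev "q!j"] t prev at_top_level[OF j(1)]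
    by (simp add: turn_class_def)
  show "q!j \<in> gOut (G (Suc n)) \<Longrightarrow> x (q!j) = 0"
    using at_top_interior[OF j(1)] by simp
qed (use t j loc fresh len in auto)

lemma locally_ok_leaving_top:
  assumes j: "at_top j" and down: "(q!j, t) \<in> gA (G (Suc n)) \<or> (q!j, t) \<in> gB (G (Suc n)) 2"
  shows "locally_ok (G (Suc n)) t (q!j) (q!(j+1))"
proof -
  have below: "(q!(j+1), q!j) \<in> gE (G (Suc n))" using q_edge_down_from_top[OF j] .
  have inner: "q!j \<in> gV (G (Suc n)) - gOut (G (Suc n))" using at_top_interior[OF j] .
  show ?thesis
    using down
  proof
    assume a: "(q!j, t) \<in> gA (G (Suc n))"
    then have "q!(j+1) \<in> gBob (G (Suc n))" using at_top_neighbour_owner(1)[OF j] gA_edge by blast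
    then have "steptype (G (Suc n)) (q!j) (q!(j+1)) LD \<or> steptype (G (Suc n)) (q!j) (q!(j+1)) RD"
      using edge_from_bob[OF below] by auto
    moreover have s1: "steptype (G (Suc n)) t (q!j) SD" using a by simp
    ultimately show ?thesis
    proof (elim disjE)
      assume "steptype (G (Suc n)) (q!j) (q!(j+1)) LD"
      then show ?thesis by (rule locally_ok_interiorI[OF s1 _ inner]) (simp add: interior_ok_def)
    next
      assume "steptype (G (Suc n)) (q!j) (q!(j+1)) RD"
      then show ?thesis by (rule locally_ok_interiorI[OF s1 _ inner]) (simp add: interior_ok_def)
    qed
  next
    assume b: "(q!j, t) \<in> gB (G (Suc n)) 2"
    then have "q!(j+1) \<in> gAlice (G (Suc n))" using at_top_neighbour_owner(2)[OF j] gB_edge by blast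
    then have s2: "steptype (G (Suc n)) (q!j) (q!(j+1)) SD" using edge_from_alice[OF below] by simp
    have s1: "steptype (G (Suc n)) t (q!j) RD" using b by simp
    show ?thesis by (rule locally_ok_interiorI[OF s1 s2 inner]) (simp add: interior_ok_def)
  qed
qed

lemma settled_above:
  assumes "lev t = Suc n" "\<And>r. r \<in> top_parents t \<Longrightarrow> r \<le> j"
  shows "settled (j+1) t c"
  using assms unfolding settled_def by (simp add: less_Suc_eq_le)

lemma descend_and_leave:
  assumes pc: "partial_cycle p" and inv: "earlier_entries P lev p" and len: "2 \<le> length p"
    and t: "p!(length p - 1) = t" "lev t = Suc n" and prev: "lev (p!(length p - 2)) = n"
    and j: "at_top j" "(q!j, t) \<in> gE (G (Suc n))" and max: "\<And>r. r \<in> top_parents t \<Longrightarrow> r \<le> j"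
    and down: "(q!j, t) \<in> gA (G (Suc n)) \<or> (q!j, t) \<in> gB (G (Suc n)) 2"
    and loc: "locally_ok (G (Suc n)) (p!(length p - 2)) t (q!j)"
    and fresh: "\<And>v c. P v c \<Longrightarrow> v \<noteq> t"
    and top_rec: "\<And>c. P (q!j) c \<Longrightarrow> recurrence_ok c 2"
    and settles: "\<And>v c. P v c \<Longrightarrow> settled (j+1) v c"
  shows "copying (j+1) (p @ [q!j, q!(j+1)])"
proof -
  let ?p = "p @ [q!j]" and ?P = "\<lambda>v c. P v c \<or> (v = t \<and> c = 3)"
  have pc1: "partial_cycle ?p" and inv1: "earlier_entries ?P lev ?p"
    using descend_to_top[OF pc inv len t prev j loc] fresh by blast+
  have ends: "?p!(length ?p - 2) = t" "?p!(length ?p - 1) = q!j" and len1: "1 < length ?p"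
    using t len by (auto simp: nth_append)
  have lj: "lev (q!j) = n" "Suc (lev (q!(j+1))) = n" "j + 1 < length q"
    using at_top_level[OF j(1)] at_top_neighbours(2)[OF j(1)] at_top_bounds[OF j(1)] by auto
  have cls: "index_class lev (?p @ [q!(j+1)]) (length ?p - 1) = 2"
    using index_class_snoc_last[OF len1, of lev "q!(j+1)"] ends t lj by (simp add: turn_class_def)
  have below: "(q!(j+1), q!j) \<in> gE (G (Suc n))" using q_edge_down_from_top[OF j(1)] .
  have loc1: "locally_ok (G (Suc n)) t (q!j) (q!(j+1))" using locally_ok_leaving_top[OF j(1) down] .
  have "partial_cycle (?p @ [q!(j+1)]) \<and> earlier_entries (settled (j+1)) lev (?p @ [q!(j+1)])"
  proof (rule partial_cycle_snoc[OF pc1 inv1, where Q = "settled (j+1)"])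
    show "settled (j+1) (?p!(length ?p - 1)) (index_class lev (?p @ [q!(j+1)]) (length ?p - 1))"
      unfolding settled_def using ends cls j(1) by (intro disjI2 disjI1 exI[of _ j]) simp
    show "settled (j+1) v c" if "?P v c" for v c
      using that settles settled_above[OF t(2) max] by blast
    show "recurrence_ok c (index_class lev (?p @ [q!(j+1)]) (length ?p - 1))"
      if "?P (?p!(length ?p - 1)) c" for c
      using that top_rec cls ends t lj by auto
    show "q!(j+1) \<in> gOut (G (Suc n)) \<Longrightarrow> x (q!(j+1)) = 0"
      using lj by (simp add: gOut_G)
  qed (use below loc1 ends len1 in auto)
  moreover have "\<not> at_top (j+1)" using lj unfolding at_top_def by simp
  ultimately show ?thesis
    using lj ends unfolding copying_def by (auto simp: nth_append)
qed

lemma descend_and_switch: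
  assumes pc: "partial_cycle p" and inv: "earlier_entries P lev p" and len: "2 \<le> length p"
    and t: "p!(length p - 1) = t" "lev t = Suc n" and prev: "lev (p!(length p - 2)) = n"
    and j: "at_top j" "(q!j, t) \<in> gB (G (Suc n)) 1" and max: "\<And>r. r \<in> top_parents t \<Longrightarrow> r \<le> j"
    and loc: "locally_ok (G (Suc n)) (p!(length p - 2)) t (q!j)"
    and fresh: "\<And>v c. P v c \<Longrightarrow> v \<noteq> t"
    and top_rec: "\<And>c. P (q!j) c \<Longrightarrow> recurrence_ok c 1"
    and entries: "\<And>v c. P v c \<Longrightarrow> second_child_entry j v c"
  shows "at_second_child j (p @ [q!j, bob_child 2 (q!j)])"
proof -
  let ?p = "p @ [q!j]" and ?P = "\<lambda>v c. P v c \<or> (v = t \<and> c = 3)" and ?z = "bob_child 2 (q!j)"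
  have bob: "q!j \<in> gBob (G (Suc n))" and tc: "t = bob_child 1 (q!j)"
    and et: "(q!j, t) \<in> gE (G (Suc n))"
    using gB_edge[OF j(2)] by auto
  have pc1: "partial_cycle ?p" and inv1: "earlier_entries ?P lev ?p"
    using descend_to_top[OF pc inv len t prev j(1) et loc] fresh by blast+
  have ends: "?p!(length ?p - 2) = t" "?p!(length ?p - 1) = q!j" and len1: "1 < length ?p"
    using t len by (auto simp: nth_append)
  have ez: "(q!j, ?z) \<in> gB (G (Suc n)) 2" using bob_child_edge[OF bob] by simp
  then have ez': "(q!j, ?z) \<in> gE (G (Suc n))" using gB_edge by blast
  have lz: "lev ?z = Suc n"
    using edge_to_outcome[OF conjunct1[OF gB_edge[OF ez]] at_top_level[OF j(1)]] by simp
  have cls: "index_class lev (?p @ [?z]) (length ?p - 1) = 1"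
    using index_class_snoc_last[OF len1, of lev ?z] ends t lz at_top_level[OF j(1)]
    by (simp add: turn_class_def)
  have loc1: "locally_ok (G (Suc n)) t (q!j) ?z"
    using locally_ok_interiorI[OF _ _ at_top_interior[OF j(1)], of t LD ?z LU] j(2) ez
    by (simp add: interior_ok_def)
  have "partial_cycle (?p @ [?z]) \<and> earlier_entries (second_child_entry j) lev (?p @ [?z])"
  proof (rule partial_cycle_snoc[OF pc1 inv1, where Q = "second_child_entry j"])
    show "second_child_entry j (?p!(length ?p - 1)) (index_class lev (?p @ [?z]) (length ?p - 1))"
      using ends cls unfolding second_child_entry_def by simp
    show "second_child_entry j v c" if "?P v c" for v c
    proof (cases "P v c")
      case True
      then show ?thesis using entries by blast
    next
      case False
      then have "v = t" using that by blast
      then show ?thesis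
        using t(2) max tc bob_children_distinct[OF bob] unfolding second_child_entry_def by simp
    qed
    show "recurrence_ok c (index_class lev (?p @ [?z]) (length ?p - 1))"
      if "?P (?p!(length ?p - 1)) c" for c
      using that top_rec cls ends t at_top_level[OF j(1)] by auto
    have "j < length q" using at_top_bounds[OF j(1)] by simp
    then show "x ?z = 0"
      using bob_loses_above[OF _ at_top_outcome[OF j(1)] bob ez'] by blast
  qed (use ez' loc1 ends len1 in auto)
  then show ?thesis
    using j(1) bob ends len unfolding at_second_child_def by (auto simp: nth_append)
qed

lemma above_top_D:
  assumes "above_top c p"
  shows "partial_cycle p" "at_top c" "2 \<le> length p" "p!(length p - 2) = q!c"
    "lev (p!(length p - 2)) = n" "earlier_entries (top_child_entry c) lev p"
    "(q!c, p!(length p - 1)) \<in> gE (G (Suc n))"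
    "q!c \<in> gBob (G (Suc n)) \<Longrightarrow> (q!c, p!(length p - 1)) \<in> gB (G (Suc n)) 1"
  using assms at_top_level bob_child_edge[of "q!c" "Suc n" 1] unfolding above_top_def by auto

lemma above_top_leave:
  assumes st: "above_top c p" and t: "t = p!(length p - 1)"
    and j: "at_top j" "(q!j, t) \<in> gE (G (Suc n))" "c \<le> j"
    and max: "\<And>r. r \<in> top_parents t \<Longrightarrow> r \<le> j"
    and down: "(q!j, t) \<in> gA (G (Suc n)) \<or> (q!j, t) \<in> gB (G (Suc n)) 2"
    and loc: "locally_ok (G (Suc n)) (q!c) t (q!j)"
    and top_rec: "\<And>cl. top_child_entry c (q!j) cl \<Longrightarrow> recurrence_ok cl 2"
  shows "copying (j+1) (p @ [q!j, q!(j+1)])"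
proof -
  note D = above_top_D[OF st, folded t]
  have "lev t = Suc n" using edge_to_outcome[OF D(7) at_top_level[OF D(2)]] by simp
  then show ?thesis
    using descend_and_leave[OF D(1,6,3) t[symmetric] _ D(5) j(1,2) _ down] max loc top_rec D(4)
      top_child_entry_not_child[OF _ D(2,7)] settled_if_top_child_entry[OF _ D(2) j(3)] by simp
qed

lemma above_top_step:
  assumes st: "above_top c p"
  shows "(\<exists>j p'. c \<le> j \<and> copying (j+1) p') \<or> at_second_child c (p @ [q!c, bob_child 2 (q!c)])"
proof -
  define t where "t = p!(length p - 1)"
  note D = above_top_D[OF st, folded t_def]
  have out: "t \<in> gOut (G (Suc n))" and lt: "lev t = Suc n"
    using edge_to_outcome[OF D(7) at_top_level[OF D(2)]] by auto
  obtain j where j: "at_top j" "(q!j, t) \<in> gE (G (Suc n))" "c \<le> j"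
    and max: "\<And>r. r \<in> top_parents t \<Longrightarrow> r \<le> j"
    using descent_target[OF D(2,7)] by blast
  note leave = above_top_leave[OF st t_def j max]
  note top_entry = top_child_entry_at_top[OF _ j(3,1)]
  consider (alice) "q!c \<in> gAlice (G (Suc n))"
    | (right) "q!c \<in> gBob (G (Suc n))" "(q!j, t) \<in> gB (G (Suc n)) 2"
    | (left) "q!c \<in> gBob (G (Suc n))" "(q!j, t) \<in> gB (G (Suc n)) 1"
    using at_top_owner[OF D(2)] at_top_same_owner(2)[OF D(2) j(1)] edge_from_bob[OF j(2)] by blast
  then show ?thesis
  proof cases
    case alice
    then have down: "(q!j, t) \<in> gA (G (Suc n))"
      using edge_from_alice[OF j(2)] at_top_same_owner(1)[OF D(2) j(1)] by blast
    have "locally_ok (G (Suc n)) (q!c) t (q!j)"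
      using locally_ok_boundaryI[OF _ _ out, of "q!c" SU "q!j" SD]
        edge_from_alice[OF D(7) alice] down
      by (simp add: boundary_ok_def)
    then show ?thesis using leave down top_entry j(3) by (fastforce simp: recurrence_ok_def)
  next
    case right
    have "j \<noteq> c" using right D(8) gB_1_2_disjoint by blast
    then have "\<And>cl. \<not> top_child_entry c (q!j) cl" using top_entry at_top_inj[OF j(1) D(2)] by blast
    moreover have "locally_ok (G (Suc n)) (q!c) t (q!j)"
      using locally_ok_boundaryI[OF _ _ out, of "q!c" RU "q!j" RD] D(8) right
      by (simp add: boundary_ok_def)
    ultimately show ?thesis using leave right j(3) by blast
  next
    case left
    then have jc: "j = c" using gB_parent_unique[OF _ D(8)] at_top_inj[OF j(1) D(2)] by blast
    have "locally_ok (G (Suc n)) (q!c) t (q!c)"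
      using locally_ok_boundaryI[OF _ _ out, of "q!c" RU "q!c" LD] D(8) left
      by (simp add: boundary_ok_def)
    moreover have "recurrence_ok cl 1" if "top_child_entry c (q!c) cl" for cl
      using top_entry[of cl] that jc by (simp add: recurrence_ok_def)
    moreover have "second_child_entry c v cl" if "top_child_entry c v cl" for v cl
      using that unfolding top_child_entry_def second_child_entry_def by auto
    ultimately show ?thesis
      using descend_and_switch[OF D(1,6,3) t_def[symmetric] lt D(5) j(1)] left max D(4) jc
        top_child_entry_not_child[OF _ D(2,7)] by simp
  qed
qed

lemma at_second_child_D:
  assumes "at_second_child c p"
  shows "partial_cycle p" "at_top c" "2 \<le> length p" "p!(length p - 2) = q!c"
    "lev (p!(length p - 2)) = n" "earlier_entries (second_child_entry c) lev p"
    "q!c \<in> gBob (G (Suc n))" "(q!c, p!(length p - 1)) \<in> gB (G (Suc n)) 2"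
  using assms at_top_level bob_child_edge[of "q!c" "Suc n" 2] unfolding at_second_child_def by auto

lemma at_second_child_step:
  assumes st: "at_second_child c p"
  shows "copying (c+1) (p @ [q!c, q!(c+1)]) \<or>
    (\<exists>j. c < j \<and> at_second_child j (p @ [q!j, bob_child 2 (q!j)]))"
proof -
  define t where "t = p!(length p - 1)"
  note D = at_second_child_D[OF st, folded t_def]
  have ec: "(q!c, t) \<in> gE (G (Suc n))" using gB_edge[OF D(8)] by blast
  have out: "t \<in> gOut (G (Suc n))" and lt: "lev t = Suc n"
    using edge_to_outcome[OF ec at_top_level[OF D(2)]] by auto
  obtain j where j: "at_top j" "(q!j, t) \<in> gE (G (Suc n))" "c \<le> j"
    and max: "\<And>r. r \<in> top_parents t \<Longrightarrow> r \<le> j"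
    using descent_target[OF D(2) ec] by blast
  have fresh: "v \<noteq> t" if "second_child_entry c v cl" for v cl
    using second_child_entry_not_child[OF that D(2,7)] st
    unfolding t_def at_second_child_def by simp
  note top_entry = second_child_entry_at_top[OF _ j(3,1)]
  have bob: "q!j \<in> gBob (G (Suc n))" using at_top_same_owner(2)[OF D(2) j(1) D(7)] .
  then consider (right) "(q!j, t) \<in> gB (G (Suc n)) 2" | (left) "(q!j, t) \<in> gB (G (Suc n)) 1"
    using edge_from_bob[OF j(2)] by blast
  then show ?thesis
  proof cases
    case right
    then have jc: "j = c" using gB_parent_unique[OF right D(8)] at_top_inj[OF j(1) D(2)] by blast
    have "locally_ok (G (Suc n)) (q!c) t (q!c)"
      using locally_ok_boundaryI[OF _ _ out, of "q!c" LU "q!c" RD] D(8)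
      by (simp add: boundary_ok_def)
    moreover have "recurrence_ok cl 2" if "second_child_entry c (q!c) cl" for cl
      using top_entry[of cl] that jc by (auto simp: recurrence_ok_def)
    ultimately have "copying (c+1) (p @ [q!c, q!(c+1)])"
      using descend_and_leave[OF D(1,6,3) t_def[symmetric] lt D(5) j(1,2)] max right jc D(4) fresh
        settled_if_second_child_entry[OF _ D(2)] by simp
    then show ?thesis ..
  next
    case left
    have jc: "c < j" using left D(8) gB_1_2_disjoint j(3) by (metis le_neq_implies_less)
    then have "\<And>cl. \<not> second_child_entry c (q!j) cl"
      using top_entry at_top_inj[OF j(1) D(2)] by blast
    moreover have "locally_ok (G (Suc n)) (q!c) t (q!j)"
      using locally_ok_boundaryI[OF _ _ out, of "q!c" LU "q!j" LD] D(8) left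
      by (simp add: boundary_ok_def)
    ultimately have "at_second_child j (p @ [q!j, bob_child 2 (q!j)])"
      using descend_and_switch[OF D(1,6,3) t_def[symmetric] lt D(5) j(1) left] max D(4) fresh
        second_child_entry_shift[OF _ D(2) j(1) jc bob] by simp
    then show ?thesis using jc by blast
  qed
qed

lemma q_second_level: "lev (q!1) = 1"
  using walk_levels_adjacent[OF q_walk, of 1] q_length q_first lev_root by auto

lemma steptype_in_copy:
  assumes "step (G n) q k t" "p!(i-1) = q!(k-1)" "p!i = q!k" "1 \<le> i" "i < length p"
  shows "step (G (Suc n)) p i t"
  using assms steptype_G_Suc unfolding step_def by auto

lemma copying_final:
  assumes st: "copying (length q - 1) p"
  shows "toom_walk (Suc n) p \<and> (\<forall>k<length p. p!k \<in> gOut (G (Suc n)) \<longrightarrow> x (p!k) = 0)"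
proof -
  let ?L = "length q - 1"
  have pc: "partial_cycle p" and top: "\<not> at_top ?L" and last: "p!(length p - 1) = q!?L"
    and prev: "2 \<le> length p" "p!(length p - 2) = q!(?L - 1)"
    and inv: "earlier_entries (settled ?L) lev p"
    using st q_length unfolding copying_def by auto
  have walk: "is_walk (G (Suc n)) p" and first: "p!0 = root"
    and locs: "\<forall>k. 0 < k \<and> k < length p - 1 \<longrightarrow> locally_ok (G (Suc n)) (p!(k-1)) (p!k) (p!(k+1))"
    and recs: "\<forall>k j. k < j \<and> j < length p - 1 \<longrightarrow> p!k = p!j \<longrightarrow>
                 recurrence_ok (index_class lev p k) (index_class lev p j)"
    and outs: "\<forall>k < length p. p!k \<in> gOut (G (Suc n)) \<longrightarrow> x (p!k) = 0"
    and second: "p!1 = q!1"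
    using pc prev unfolding partial_cycle_def by auto
  have len: "3 \<le> length p"
  proof (rule ccontr)
    assume "\<not> 3 \<le> length p"
    then have "length p - 1 = 1" using prev(1) by simp
    then have "p!1 = root" using last q_last by simp
    then show False using second q_second_level lev_root by simp
  qed
  have "step (G (Suc n)) p 1 SU \<or> step (G (Suc n)) p 1 RU"
    using q_first_step steptype_in_copy[of 1 _ p 1] first second q_first len by auto
  moreover have "step (G (Suc n)) p (length p - 1) SD \<or> step (G (Suc n)) p (length p - 1) RD"
  proof -
    have "1 \<le> length p - 1" "length p - 1 < length p" "p!(length p - 1 - 1) = q!(?L - 1)"
      using len prev(2) by (simp_all add: numeral_eq_Suc)
    then show ?thesis using q_last_step steptype_in_copy[of ?L _ p "length p - 1"] last by blast
  qed
  moreover have "recurrence_ok (index_class lev p k) (index_class lev p j)"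
    if "k < j" "j < length p" "p!k = p!j" for k j
  proof (cases "j < length p - 1")
    case True
    then show ?thesis using recs that by blast
  next
    case False
    then have j: "j = length p - 1" using that by simp
    then have "settled ?L (q!?L) (index_class lev p k)"
      using earlier_entriesD[OF inv, of k] that last by simp
    then have "recurrence_ok (index_class lev p k) (index_class lev q ?L)"
      using settled_recurrence[OF _ _ top] q_length by simp
    then show ?thesis using j len q_length by (simp add: index_class_def)
  qed
  ultimately have "toom_walk (Suc n) p"
    using walk len first last q_last locs unfolding toom_walk_def by simp
  then show ?thesis using outs by blast
qed

lemma state_index_bound:
  "copying c p \<or> above_top c p \<or> at_second_child c p \<Longrightarrow> c < length q"
  using at_top_bounds unfolding copying_def above_top_def at_second_child_def by fastforce

lemma toom_walk_present_from_states:
  "copying c p \<or> above_top c p \<or> at_second_child c p \<Longrightarrow> toom_walk_present (Suc n) x"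
proof (induction "length q - c" arbitrary: c p rule: less_induct)
  case less
  have later: "toom_walk_present (Suc n) x"
    if "c < c'" "copying c' p' \<or> above_top c' p' \<or> at_second_child c' p'" for c' p'
    using less.hyps[OF _ that(2)] state_index_bound[OF that(2)] that(1) by simp
  have second: "toom_walk_present (Suc n) x" if "at_second_child c p'" for p'
    using at_second_child_step[OF that] later[OF less_add_one] later by blast
  consider "copying c p" | "above_top c p" | "at_second_child c p" using less.prems by blast
  then show ?case
  proof cases
    case 1
    show ?thesis
    proof (cases "c = length q - 1")
      case True
      then show ?thesis using copying_final 1 unfolding toom_walk_present_def by blast
    next
      case False
      moreover have "c < length q" using 1 state_index_bound by blast
      ultimately have "c + 1 < length q" by linarith
      then show ?thesis
        using copying_to_above_top[OF 1] copying_step[OF 1] later[of "c+1"] by fastforce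
    qed
  next
    case 2
    then consider j p' where "c \<le> j" "copying (j+1) p'"
      | "at_second_child c (p @ [q!c, bob_child 2 (q!c)])"
      using above_top_step by blast
    then show ?thesis
    proof cases
      case (1 j p')
      then show ?thesis using later[of "j+1" p'] by simp
    qed (rule second)
  next
    case 3
    then show ?thesis by (rule second)
  qed
qed

theorem refined_toom_walk_present: "toom_walk_present (Suc n) x"
  using toom_walk_present_from_states copying_start by blast

end

section \<open>Induction on the depth\<close>

context product_game
begin

definition one_step_value :: "nat \<Rightarrow> ('a \<times> 'b \<Rightarrow> nat) \<Rightarrow> 'a \<times> 'b \<Rightarrow> nat" where
  "one_step_value n x v =
     (if (v \<in> gAlice (G (Suc n)) \<and> (\<exists>u. (v, u) \<in> gA (G (Suc n)) \<and> x u = 0)) \<or>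
         (v \<in> gBob (G (Suc n)) \<and> (\<forall>u. (v, u) \<in> gE (G (Suc n)) \<longrightarrow> x u = 0))
      then 0 else 1)"

lemma one_step_value_eq_0_iff:
  "one_step_value n x v = 0 \<longleftrightarrow>
     (v \<in> gAlice (G (Suc n)) \<and> (\<exists>u. (v, u) \<in> gA (G (Suc n)) \<and> x u = 0)) \<or>
     (v \<in> gBob (G (Suc n)) \<and> (\<forall>u. (v, u) \<in> gE (G (Suc n)) \<longrightarrow> x u = 0))"
  by (simp add: one_step_value_def)

lemma reach_G_Suc: "v \<in> reach (G n) \<sigma> \<Longrightarrow> v \<in> reach (G (Suc n)) \<sigma>"
proof (induction rule: reach.induct)
  case root
  show ?case using reach.root[of "G (Suc n)" \<sigma>] by (simp add: groot_G)
next
  case (alice v)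
  show ?case by (rule reach.alice[OF alice.IH gAlice_G_Suc[OF alice.hyps(2)]])
next
  case (bob v w)
  show ?case by (rule reach.bob[OF bob.IH gBob_G_Suc[OF bob.hyps(2)] gE_G_Suc[OF bob.hyps(3)]])
qed

lemma alice_wins_one_step_value:
  assumes "alice_wins (G (Suc n)) x"
  shows "alice_wins (G n) (one_step_value n x)"
proof -
  obtain \<sigma> where legal: "\<forall>v \<in> gAlice (G (Suc n)). (v, \<sigma> v) \<in> gE (G (Suc n))"
    and wins: "\<forall>v \<in> reach (G (Suc n)) \<sigma>. v \<in> gOut (G (Suc n)) \<longrightarrow> x v = 0"
    using assms unfolding alice_wins_def by blast
  have "(v, \<sigma> v) \<in> gE (G n)" if "v \<in> gAlice (G n)" for v
  proof -
    have e: "(v, \<sigma> v) \<in> gE (G (Suc n))" using legal gAlice_G_Suc[OF that] by blast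
    have "lev v < n" using that by (simp add: gAlice_G)
    then have "lev (\<sigma> v) \<le> n" using edge_level[OF e] by simp
    then show ?thesis using gE_G_restrict[OF e] by blast
  qed
  moreover have "one_step_value n x v = 0" if "v \<in> reach (G n) \<sigma>" "v \<in> gOut (G n)" for v
  proof -
    have r: "v \<in> reach (G (Suc n)) \<sigma>" using reach_G_Suc[OF that(1)] .
    have "v \<in> gV (G (Suc n))" "lev v = n" using that(2) gV_G_Suc by (auto simp: gOut_G)
    then have owner: "v \<in> gAlice (G (Suc n)) \<or> v \<in> gBob (G (Suc n))" using interior_owner by simp
    have next_out: "u \<in> gOut (G (Suc n))" if "(v, u) \<in> gE (G (Suc n))" for u
      using edge_to_outcome[OF that] \<open>lev v = n\<close> by simp
    show ?thesis
      using owner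
    proof
      assume a: "v \<in> gAlice (G (Suc n))"
      then have "(v, \<sigma> v) \<in> gA (G (Suc n))" "x (\<sigma> v) = 0"
        using legal edge_from_alice wins reach.alice[OF r a] next_out by blast+
      then show ?thesis using a unfolding one_step_value_eq_0_iff by blast
    next
      assume b: "v \<in> gBob (G (Suc n))"
      then have "\<forall>u. (v, u) \<in> gE (G (Suc n)) \<longrightarrow> x u = 0"
        using wins reach.bob[OF r b] next_out by blast
      then show ?thesis using b unfolding one_step_value_eq_0_iff by blast
    qed
  qed
  ultimately show ?thesis unfolding alice_wins_def by blast
qed

lemma toom_walk_present_Suc:
  assumes "1 \<le> n" "toom_walk_present n (one_step_value n x)"
  shows "toom_walk_present (Suc n) x"
proof -
  obtain q where q: "toom_walk n q"
    and present: "\<And>k. k < length q \<Longrightarrow> q!k \<in> gOut (G n) \<Longrightarrow> one_step_value n x (q!k) = 0"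
    using assms(2) unfolding toom_walk_present_def by blast
  have top: "(q!k \<in> gAlice (G (Suc n)) \<and> (\<exists>u. (q!k, u) \<in> gA (G (Suc n)) \<and> x u = 0)) \<or>
      (q!k \<in> gBob (G (Suc n)) \<and> (\<forall>u. (q!k, u) \<in> gE (G (Suc n)) \<longrightarrow> x u = 0))"
    if "k < length q" "q!k \<in> gOut (G n)" for k
    using present[OF that] unfolding one_step_value_eq_0_iff .
  have "toom_refinement lt D1 D2 n q x"
    unfolding toom_refinement_def toom_refinement_axioms_def
  proof (intro conjI allI impI product_game_axioms assms(1) q)
    show "\<exists>u. (q!k, u) \<in> gA (G (Suc n)) \<and> x u = 0"
      if "k < length q" "q!k \<in> gOut (G n)" "q!k \<in> gAlice (G (Suc n))" for k
      using top[OF that(1,2)] that(3) alice_not_bob by blast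
    show "x u = 0"
      if "k < length q" "q!k \<in> gOut (G n)" "q!k \<in> gBob (G (Suc n))"
        "(q!k, u) \<in> gE (G (Suc n))" for k u
      using top[OF that(1,2)] that(3,4) alice_not_bob by blast
  qed
  then show ?thesis by (rule toom_refinement.refined_toom_walk_present)
qed

lemma root_alice: "lt \<Longrightarrow> 0 < m \<Longrightarrow> root \<in> gAlice (G m)"
  and root_bob: "\<not> lt \<Longrightarrow> 0 < m \<Longrightarrow> root \<in> gBob (G m)"
  using root_in_gV[of m] lev_root unfolding gAlice_G gBob_G by simp_all

lemma root_reach: "root \<in> reach (G m) \<sigma>"
  using reach.root[of "G m" \<sigma>] by (simp add: groot_G)

lemma edge_from_root:
  "(root, w) \<in> gE (G 1) \<Longrightarrow> w \<in> gOut (G 1) \<and> w \<noteq> root"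
  using edge_to_outcome[of root w 0] lev_root by auto

lemma root_interior: "root \<in> gV (G 1) - gOut (G 1)"
  using root_in_gV lev_root by (simp add: gOut_G)

lemma toom_walk_presentI:
  "toom_walk m p \<Longrightarrow> (\<forall>v \<in> set p. v \<in> gOut (G m) \<longrightarrow> x v = 0) \<Longrightarrow> toom_walk_present m x"
  unfolding toom_walk_present_def by (auto simp: all_set_conv_all_nth)

lemma toom_walk_alice_root:
  assumes a: "(root, u) \<in> gA (G 1)"
  shows "toom_walk 1 [root, u, root]"
proof -
  let ?p = "[root, u, root]"
  have e: "(root, u) \<in> gE (G 1)" using gA_edge[OF a] by blast
  then have out: "u \<in> gOut (G 1)" and ne: "u \<noteq> root" using edge_from_root by auto
  have walk: "is_walk (G 1) ?p"
    unfolding is_walk_def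
  proof (intro conjI allI impI)
    fix k assume "1 \<le> k \<and> k < length ?p"
    then have "k = 1 \<or> k = 2" by auto
    then show "(?p!(k-1), ?p!k) \<in> gE (G 1) \<or> (?p!k, ?p!(k-1)) \<in> gE (G 1)"
      using e by auto
  qed simp
  have loc: "locally_ok (G 1) root u root"
    using locally_ok_boundaryI[OF _ _ out, of root SU root SD] a by (simp add: boundary_ok_def)
  have rec: "recurrence_ok (index_class lev ?p k) (index_class lev ?p j)"
    if "k < j" "j < 3" "?p!k = ?p!j" for k j
  proof -
    have "k = 0 \<and> j = 1 \<or> k = 0 \<and> j = 2 \<or> k = 1 \<and> j = 2" using that by auto
    then have "k = 0 \<and> j = 2" using that ne by auto
    then show ?thesis by (simp add: index_class_def recurrence_ok_def)
  qed
  show ?thesis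
    unfolding toom_walk_def using walk loc rec a by (simp add: step_def)
qed

lemma toom_walk_present_one_alice:
  assumes "alice_wins (G 1) x" "lt"
  shows "toom_walk_present 1 x"
proof -
  obtain \<sigma> where legal: "\<forall>v \<in> gAlice (G 1). (v, \<sigma> v) \<in> gE (G 1)"
    and wins: "\<forall>v \<in> reach (G 1) \<sigma>. v \<in> gOut (G 1) \<longrightarrow> x v = 0"
    using assms(1) unfolding alice_wins_def by blast
  have ra: "root \<in> gAlice (G 1)" using root_alice[OF assms(2)] by simp
  then have "(root, \<sigma> root) \<in> gA (G 1)" using legal edge_from_alice by blast
  moreover have "x (\<sigma> root) = 0" if "\<sigma> root \<in> gOut (G 1)"
    using wins reach.alice[OF root_reach ra] that by blast
  ultimately show ?thesis
    using toom_walk_presentI[OF toom_walk_alice_root] root_interior by auto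
qed

lemma root_bob_child:
  assumes "\<not> lt" "k \<in> {1,2}"
  shows "(root, bob_child k root) \<in> gB (G 1) k" "(root, bob_child k root) \<in> gE (G 1)"
    "bob_child k root \<in> gOut (G 1)" "bob_child k root \<noteq> root"
proof -
  show "(root, bob_child k root) \<in> gB (G 1) k"
    using bob_child_edge[OF root_bob[OF assms(1)] assms(2)] by simp
  then show e: "(root, bob_child k root) \<in> gE (G 1)" using gB_edge by blast
  show "bob_child k root \<in> gOut (G 1)" "bob_child k root \<noteq> root" using edge_from_root[OF e] by auto
qed

lemma toom_walk_bob_root:
  assumes "\<not> lt"
  shows "toom_walk 1 [root, bob_child 1 root, root, bob_child 2 root, root]"
proof -
  define w1 w2 where "w1 = bob_child 1 root" and "w2 = bob_child 2 root"
  have b1: "(root, w1) \<in> gB (G 1) 1" and b2: "(root, w2) \<in> gB (G 1) 2"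
    and e: "(root, w1) \<in> gE (G 1)" "(root, w2) \<in> gE (G 1)"
    and out: "w1 \<in> gOut (G 1)" "w2 \<in> gOut (G 1)" and ne: "w1 \<noteq> root" "w2 \<noteq> root"
    using root_bob_child[OF assms] unfolding w1_def w2_def by auto
  have ne12: "w1 \<noteq> w2"
    using bob_children_distinct[OF root_bob[OF assms, of 1]] unfolding w1_def w2_def by simp
  let ?p = "[root, w1, root, w2, root]"
  have walk: "is_walk (G 1) ?p"
    unfolding is_walk_def
  proof (intro conjI allI impI)
    fix k assume "1 \<le> k \<and> k < length ?p"
    then have "k = 1 \<or> k = 2 \<or> k = 3 \<or> k = 4" by auto
    then show "(?p!(k-1), ?p!k) \<in> gE (G 1) \<or> (?p!k, ?p!(k-1)) \<in> gE (G 1)"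
      using e by auto
  qed simp
  have "locally_ok (G 1) root w1 root"
    using locally_ok_boundaryI[OF _ _ out(1), of root RU root LD] b1 by (simp add: boundary_ok_def)
  moreover have "locally_ok (G 1) w1 root w2"
    using locally_ok_interiorI[OF _ _ root_interior, of w1 LD w2 LU] b1 b2
    by (simp add: interior_ok_def)
  moreover have "locally_ok (G 1) root w2 root"
    using locally_ok_boundaryI[OF _ _ out(2), of root LU root RD] b2 by (simp add: boundary_ok_def)
  ultimately have loc: "locally_ok (G 1) (?p!(k-1)) (?p!k) (?p!(k+1))" if "0 < k" "k < 4" for k
    using that by (auto simp: less_Suc_eq numeral_eq_Suc)
  have rec: "recurrence_ok (index_class lev ?p k) (index_class lev ?p j)"
    if "k < j" "j < 5" "?p!k = ?p!j" for k j
  proof -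
    have "k = 0 \<or> k = 1 \<or> k = 2 \<or> k = 3" "j = 1 \<or> j = 2 \<or> j = 3 \<or> j = 4" using that by auto
    then have "k = 0 \<and> j = 2 \<or> k = 0 \<and> j = 4 \<or> k = 2 \<and> j = 4"
      using that ne ne12 by auto
    moreover have "lev w1 = 1" "lev w2 = 1" using out by (simp_all add: gOut_G)
    ultimately show ?thesis
      using lev_root by (auto simp: index_class_def turn_class_def recurrence_ok_def)
  qed
  show ?thesis
    unfolding toom_walk_def w1_def[symmetric] w2_def[symmetric]
    using walk loc rec b1 b2 by (simp add: step_def)
qed

lemma toom_walk_present_one_bob:
  assumes "alice_wins (G 1) x" "\<not> lt"
  shows "toom_walk_present 1 x"
proof -
  obtain \<sigma> where wins: "\<forall>v \<in> reach (G 1) \<sigma>. v \<in> gOut (G 1) \<longrightarrow> x v = 0"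
    using assms(1) unfolding alice_wins_def by blast
  have "x (bob_child k root) = 0" if "k \<in> {1,2}" for k
    using wins reach.bob[OF root_reach root_bob[OF assms(2)] root_bob_child(2)[OF assms(2) that]]
      root_bob_child(3)[OF assms(2) that] by simp
  then show ?thesis
    using toom_walk_presentI[OF toom_walk_bob_root[OF assms(2)]] root_interior by auto
qed

lemma toom_walk_present_if_alice_wins:
  "1 \<le> n \<Longrightarrow> alice_wins (G n) x \<Longrightarrow> toom_walk_present n x"
proof (induction n arbitrary: x rule: nat_induct_at_least)
  case base
  then show ?case using toom_walk_present_one_alice toom_walk_present_one_bob by blast
next
  case (Suc n)
  then show ?case
    using toom_walk_present_Suc alice_wins_one_step_value by blast
qed

theorem toom_present_if_alice_wins:
  "1 \<le> n \<Longrightarrow> alice_wins (G n) x \<Longrightarrow> toom_present (G n) x"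
  using toom_walk_present_if_alice_wins toom_cycle_if_toom_walk
  unfolding toom_walk_present_def toom_present_def by blast

end

lemma product_game_Tree_N2: "product_game Tree N2"
  unfolding product_game_def Tree_def N2_def by auto

lemma product_game_N2_N2: "product_game N2 N2"
  unfolding product_game_def N2_def by auto

theorem theorem10:
  fixes n :: nat
  assumes "n \<ge> 1"
  shows "(\<forall>x :: nat list \<times> (nat \<times> nat) \<Rightarrow> nat.
            (\<forall>v \<in> gOut (mkgame True False Tree N2 n). x v \<in> {0,1}) \<longrightarrow>
            alice_wins (mkgame True False Tree N2 n) x \<longrightarrow>
            toom_present (mkgame True False Tree N2 n) x)
       \<and> (\<forall>x :: nat list \<times> (nat \<times> nat) \<Rightarrow> nat.
            (\<forall>v \<in> gOut (mkgame False True Tree N2 n). x v \<in> {0,1}) \<longrightarrow>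
            alice_wins (mkgame False True Tree N2 n) x \<longrightarrow>
            toom_present (mkgame False True Tree N2 n) x)
       \<and> (\<forall>x :: (nat \<times> nat) \<times> (nat \<times> nat) \<Rightarrow> nat.
            (\<forall>v \<in> gOut (mkgame True False N2 N2 n). x v \<in> {0,1}) \<longrightarrow>
            alice_wins (mkgame True False N2 N2 n) x \<longrightarrow>
            toom_present (mkgame True False N2 N2 n) x)
       \<and> (\<forall>x :: (nat \<times> nat) \<times> (nat \<times> nat) \<Rightarrow> nat.
            (\<forall>v \<in> gOut (mkgame False True N2 N2 n). x v \<in> {0,1}) \<longrightarrow>
            alice_wins (mkgame False True N2 N2 n) x \<longrightarrow>
            toom_present (mkgame False True N2 N2 n) x)"
  using product_game.toom_present_if_alice_wins[OF product_game_Tree_N2, where lt = True]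
    product_game.toom_present_if_alice_wins[OF product_game_Tree_N2, where lt = False]
    product_game.toom_present_if_alice_wins[OF product_game_N2_N2, where lt = True]
    product_game.toom_present_if_alice_wins[OF product_game_N2_N2, where lt = False]
    assms
  by simp

end
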